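(* Let $S''=\mathcal{O}[(x_{t,s})_{t\in Z,\,s\in Z^c}]$ be the polynomial ring over $\mathcal{O}$ in the entries of the $l\times 2(n-r)$ matrix $(B_1\,|\,B_2)$, and let $I''\subset S''$ be the ideal generated by the set $\wedge^2(B_1|B_2)$ together with the element $\mathrm{Tr}(B_2J_{n-r}B_1^{t}J_{l})+2\pi$. Then there is an isomorphism of $\mathcal{O}$-algebras $$S/I\;\cong\; S''/I''.$$
   Context: Let $p$ be an odd prime, $F/\mathbb{Q}_p$ a finite extension with uniformizer $\pi$, $\breve F$ the completion of the maximal unramified extension of $F$ (in a fixed algebraic closure), $\mathcal{O}$ the ring of integers of $\breve F$ (so $\pi$ is a uniformizer of $\mathcal{O}$ and $2\in\mathcal{O}^\times$), and $k$ the (algebraically closed) residue field of $\mathcal{O}$. Let $d\ge 5$ and $l$ be integers with $2\le l\le d-2$ and $d\equiv l \pmod 2$; put $n=\lfloor d/2\rfloor$, $r=\lfloor l/2\rfloor$, so $d-l=2(n-r)$. Let $X=(x_{i,j})_{1\le i,j\le d}$ be a $d\times d$ matrix of indeterminates and $S=\mathcal{O}[X]=\mathcal{O}[(x_{i,j})_{1\le i,j\le d}]$. Write $X$ in block form $$X=\begin{pmatrix}E_1&O_1&E_2\\ B_1&A&B_2\\ E_3&O_2&E_4\end{pmatrix}$$ with $E_c$ of size $(n-r)\times(n-r)$, $O_1,O_2$ of size $(n-r)\times l$, $B_1,B_2$ of size $l\times(n-r)$, $A$ of size $l\times l$. Let $Z=\{n-r+1,\dots,d-n+r\}$ (the indices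 of the middle block) and $Z^c=\{1,\dots,d\}\setminus Z$. Let $J_m$ denote the $m\times m$ matrix with $1$'s on the antidiagonal and $0$ elsewhere. Let $S_0$ be the $d\times d$ matrix in the same block form with $J_{n-r}$ in the upper-right and lower-left corner blocks and $0$ elsewhere, and $S_1$ the $d\times d$ matrix with $J_l$ in the middle $l\times l$ block and $0$ elsewhere. Let $\wedge^2X$ denote the set of all $2\times2$ minors of $X$, and $\wedge^2(B_1|B_2)$ the set of elements $x_{i,j}x_{t,s}-x_{i,s}x_{t,j}$ with $i,t\in Z$, $j,s\in Z^c$. Let $I^{\mathrm{naive}}\subset S$ be the ideal generated by the entries of $X^2$, the elements of $\wedge^2X$, the entries of $X^tS_0X-2\pi(S_0X+\pi S_1X)$, and the entries of $X^tS_1X+2(S_0X+\pi S_1X)$. Let $I^{\mathrm{add}}\subset S$ be the ideal generated by $\mathrm{Tr}(X)$, $\mathrm{Tr}(A)+2\pi$, the entries of $AJ_l-J_lA^t$, and the entries of $B_2J_{n-r}B_1^t-AJ_l$. Put $I=I^{\mathrm{naive}}+I^{\mathrm{add}}$. *)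

theory Defs
  imports "HOL-Algebra.Algebra" "HOL-Library.Poly_Mapping"
begin

text \<open>O is modelled as an integral domain which is a complete discrete valuation ring
  of characteristic 0 with a uniformizer, whose residue field O modulo the uniformizer is algebraically
  closed of characteristic p, p an odd prime (so 2 is a unit).\<close>

definition breve_O_like :: "nat \<Rightarrow> 'a::idom \<Rightarrow> bool" where
  "breve_O_like p \<pi>\<^sub>O \<longleftrightarrow>
     Factorial_Ring.prime p \<and> odd p \<and> CHAR('a) = 0 \<and>
     \<pi>\<^sub>O \<noteq> 0 \<and> \<not> \<pi>\<^sub>O dvd 1 \<and>
     (\<forall>x::'a. x \<noteq> 0 \<longrightarrow> (\<exists>u k. u dvd 1 \<and> x = u * \<pi>\<^sub>O ^ k)) \<and>
     \<pi>\<^sub>O dvd of_nat p \<and>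
     (\<forall>(c::nat \<Rightarrow> 'a) m. m \<ge> 1 \<longrightarrow>
        (\<exists>x. \<pi>\<^sub>O dvd (x ^ m + (\<Sum>i<m. c i * x ^ i)))) \<and>
     (\<forall>f::nat \<Rightarrow> 'a. (\<forall>k. \<pi>\<^sub>O ^ k dvd f (Suc k) - f k) \<longrightarrow>
        (\<exists>y. \<forall>k. \<pi>\<^sub>O ^ k dvd y - f k))"

type_synonym 'a mpoly = "((nat \<times> nat) \<Rightarrow>\<^sub>0 nat) \<Rightarrow>\<^sub>0 'a"

definition Var :: "nat \<times> nat \<Rightarrow> 'a::comm_ring_1 mpoly" where
  "Var v = Poly_Mapping.single (Poly_Mapping.single v 1) 1"

definition Const :: "'a::comm_ring_1 \<Rightarrow> 'a mpoly" where
  "Const c = Poly_Mapping.single 0 c"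

definition poly_ring :: "(nat \<times> nat) set \<Rightarrow> ('a::comm_ring_1 mpoly) ring" where
  "poly_ring V = \<lparr> carrier = {p :: 'a mpoly. \<forall>m\<in>Poly_Mapping.keys p. Poly_Mapping.keys m \<subseteq> V},
                   monoid.mult = (*), one = 1, ring.zero = 0, ring.add = (+) \<rparr>"

definition O_alg_iso ::
  "('a::comm_ring_1 mpoly) ring \<Rightarrow> 'a mpoly set \<Rightarrow> ('a mpoly) ring \<Rightarrow> 'a mpoly set
     \<Rightarrow> ('a mpoly set \<Rightarrow> 'a mpoly set) \<Rightarrow> bool" where
  "O_alg_iso R I R' I' h \<longleftrightarrow>
     h \<in> ring_iso (R Quot I) (R' Quot I') \<and>
     (\<forall>c. h (I +>\<^bsub>R\<^esub> Const c) = I' +>\<^bsub>R'\<^esub> Const c)"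

section \<open>Matrices (1-indexed functions)\<close>

definition mmul :: "nat \<Rightarrow> (nat \<Rightarrow> nat \<Rightarrow> 'b::comm_ring_1) \<Rightarrow> (nat \<Rightarrow> nat \<Rightarrow> 'b) \<Rightarrow> nat \<Rightarrow> nat \<Rightarrow> 'b" where
  "mmul k M N i j = (\<Sum>t\<in>{1..k}. M i t * N t j)"

definition mtr :: "(nat \<Rightarrow> nat \<Rightarrow> 'b) \<Rightarrow> nat \<Rightarrow> nat \<Rightarrow> 'b" where
  "mtr M i j = M j i"

definition Jmat :: "nat \<Rightarrow> nat \<Rightarrow> nat \<Rightarrow> 'b::comm_ring_1" where
  "Jmat k i j = (if i + j = k + 1 then 1 else 0)"

definition Xmat :: "nat \<Rightarrow> nat \<Rightarrow> 'a::comm_ring_1 mpoly" where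
  "Xmat i j = Var (i, j)"

text \<open>Middle index set Z and its complement, with m = n - r.\<close>
definition Zset :: "nat \<Rightarrow> nat \<Rightarrow> nat set" where
  "Zset d m = {m + 1 .. d - m}"
definition Zc :: "nat \<Rightarrow> nat \<Rightarrow> nat set" where
  "Zc d m = {1..d} - Zset d m"

text \<open>S0: J_m in the upper right and lower left corner blocks; S1: J_l in the middle block.\<close>
definition S0mat :: "nat \<Rightarrow> nat \<Rightarrow> nat \<Rightarrow> nat \<Rightarrow> 'b::comm_ring_1" where
  "S0mat d m i j = (if i \<in> Zc d m \<and> j \<in> {1..d} \<and> i + j = d + 1 then 1 else 0)"
definition S1mat :: "nat \<Rightarrow> nat \<Rightarrow> nat \<Rightarrow> nat \<Rightarrow> 'b::comm_ring_1" where
  "S1mat d m i j = (if i \<in> Zset d m \<and> i + j = d + 1 then 1 else 0)"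

text \<open>Blocks (indices from 1): A is l x l, B1 and B2 are l x m.\<close>
definition Ablk :: "nat \<Rightarrow> nat \<Rightarrow> nat \<Rightarrow> 'a::comm_ring_1 mpoly" where
  "Ablk m a b = Xmat (m + a) (m + b)"
definition B1blk :: "nat \<Rightarrow> nat \<Rightarrow> nat \<Rightarrow> 'a::comm_ring_1 mpoly" where
  "B1blk m a c = Xmat (m + a) c"
definition B2blk :: "nat \<Rightarrow> nat \<Rightarrow> nat \<Rightarrow> nat \<Rightarrow> 'a::comm_ring_1 mpoly" where
  "B2blk m l a c = Xmat (m + a) (m + l + c)"

definition I_naive_gens :: "nat \<Rightarrow> nat \<Rightarrow> 'a::comm_ring_1 \<Rightarrow> 'a mpoly set" where
  "I_naive_gens d m \<pi>\<^sub>O =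
     {mmul d Xmat Xmat i j | i j. i \<in> {1..d} \<and> j \<in> {1..d}}
   \<union> {Xmat i j * Xmat t s - Xmat i s * Xmat t j | i t j s.
        1 \<le> i \<and> i < t \<and> t \<le> d \<and> 1 \<le> j \<and> j < s \<and> s \<le> d}
   \<union> {mmul d (mmul d (mtr Xmat) (S0mat d m)) Xmat i j
        - 2 * Const \<pi>\<^sub>O * (mmul d (S0mat d m) Xmat i j + Const \<pi>\<^sub>O * mmul d (S1mat d m) Xmat i j)
        | i j. i \<in> {1..d} \<and> j \<in> {1..d}}
   \<union> {mmul d (mmul d (mtr Xmat) (S1mat d m)) Xmat i j
        + 2 * (mmul d (S0mat d m) Xmat i j + Const \<pi>\<^sub>O * mmul d (S1mat d m) Xmat i j)
        | i j. i \<in> {1..d} \<and> j \<in> {1..d}}"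

definition I_add_gens :: "nat \<Rightarrow> nat \<Rightarrow> nat \<Rightarrow> 'a::comm_ring_1 \<Rightarrow> 'a mpoly set" where
  "I_add_gens d m l \<pi>\<^sub>O =
     {(\<Sum>i\<in>{1..d}. Xmat i i)}
   \<union> {(\<Sum>a\<in>{1..l}. Ablk m a a) + 2 * Const \<pi>\<^sub>O}
   \<union> {mmul l (Ablk m) (Jmat l) a b - mmul l (Jmat l) (mtr (Ablk m)) a b
        | a b. a \<in> {1..l} \<and> b \<in> {1..l}}
   \<union> {mmul m (mmul m (B2blk m l) (Jmat m)) (mtr (B1blk m)) a b - mmul l (Ablk m) (Jmat l) a b
        | a b. a \<in> {1..l} \<and> b \<in> {1..l}}"

definition I_dd_gens :: "nat \<Rightarrow> nat \<Rightarrow> nat \<Rightarrow> 'a::comm_ring_1 \<Rightarrow> 'a mpoly set" where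
  "I_dd_gens d m l \<pi>\<^sub>O =
     {Xmat i j * Xmat t s - Xmat i s * Xmat t j | i t j s.
        i \<in> Zset d m \<and> t \<in> Zset d m \<and> j \<in> Zc d m \<and> s \<in> Zc d m}
   \<union> {(\<Sum>a\<in>{1..l}. mmul l (mmul m (mmul m (B2blk m l) (Jmat m)) (mtr (B1blk m))) (Jmat l) a a)
        + 2 * Const \<pi>\<^sub>O}"

end

theory Submission
  imports Defs
begin

text \<open>The variables outside the block (B1|B2) can be eliminated. Modulo I, the relation
  B2 J B1^t = A J expresses A through B, and the rows of X^t S1 X + 2(S0 X + \<pi> S1 X) indexed
  outside the middle express the outer rows of X through B, because 2 is a unit. This gives a
  substitution X \<mapsto> Y(B) that fixes B and agrees with X modulo I. It maps every generator of I
  into I'', by two facts that hold modulo I'': B has rank at most one (its 2 \<times> 2 minors vanish),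
  so that every product B N B collapses to tr(N B) B; and the trace relation replaces
  tr(B2 J B1^t J) by -2\<pi>. As the generators of I'' lie in I, the substitution induces
  S/I \<cong> S''/I''.\<close>

section \<open>Substitution of polynomials for variables\<close>

definition subst_monom ::
    "(nat \<times> nat \<Rightarrow> 'a::comm_ring_1 mpoly) \<Rightarrow> (nat \<times> nat \<Rightarrow>\<^sub>0 nat) \<Rightarrow> 'a mpoly" where
  "subst_monom \<sigma> k = (\<Prod>v\<in>Poly_Mapping.keys k. \<sigma> v ^ Poly_Mapping.lookup k v)"

definition subst :: "(nat \<times> nat \<Rightarrow> 'a::comm_ring_1 mpoly) \<Rightarrow> 'a mpoly \<Rightarrow> 'a mpoly" where
  "subst \<sigma> p = (\<Sum>k\<in>Poly_Mapping.keys p. Const (Poly_Mapping.lookup p k) * subst_monom \<sigma> k)"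

lemma Const_0 [simp]: "Const 0 = 0"
  by (simp add: Const_def)

lemma Const_1 [simp]: "Const 1 = 1"
  by (simp add: Const_def)

lemma Const_add: "Const (a + b) = Const a + Const b"
  by (simp add: Const_def single_add)

lemma Const_mult: "Const a * Const b = Const (a * b)"
  by (simp add: Const_def mult_single)

lemma Const_numeral [simp]: "Const (numeral n) = numeral n"
  by (simp add: Const_def)

lemma poly_mapping_sum_single:
  "p = (\<Sum>k\<in>Poly_Mapping.keys p. Poly_Mapping.single k (Poly_Mapping.lookup p k))"
proof (rule poly_mapping_eqI)
  fix x
  show "Poly_Mapping.lookup p x = Poly_Mapping.lookup
      (\<Sum>k\<in>Poly_Mapping.keys p. Poly_Mapping.single k (Poly_Mapping.lookup p k)) x"
    by (cases "x \<in> Poly_Mapping.keys p") (auto simp: lookup_sum lookup_single when_def in_keys_iff)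
qed

lemma subst_monom_superset:
  assumes "finite K" "Poly_Mapping.keys k \<subseteq> K"
  shows "subst_monom \<sigma> k = (\<Prod>v\<in>K. \<sigma> v ^ Poly_Mapping.lookup k v)"
  unfolding subst_monom_def
  by (rule prod.mono_neutral_left) (use assms in \<open>auto simp: in_keys_iff\<close>)

lemma subst_monom_add: "subst_monom \<sigma> (a + b) = subst_monom \<sigma> a * subst_monom \<sigma> b"
proof -
  let ?K = "Poly_Mapping.keys a \<union> Poly_Mapping.keys b"
  have "subst_monom \<sigma> (a + b) = (\<Prod>v\<in>?K. \<sigma> v ^ Poly_Mapping.lookup (a + b) v)"
    by (rule subst_monom_superset) (simp_all add: keys_add)
  also have "\<dots> = (\<Prod>v\<in>?K. \<sigma> v ^ Poly_Mapping.lookup a v) * (\<Prod>v\<in>?K. \<sigma> v ^ Poly_Mapping.lookup b v)"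
    by (simp add: lookup_add power_add prod.distrib)
  also have "\<dots> = subst_monom \<sigma> a * subst_monom \<sigma> b"
    by (simp add: subst_monom_superset[of ?K])
  finally show ?thesis .
qed

lemma subst_monom_Var: "subst_monom Var k = Poly_Mapping.single k 1"
proof -
  have Var_power: "Var v ^ n = Poly_Mapping.single (Poly_Mapping.single v n) 1" for v n
    by (induction n) (auto simp: Var_def mult_single simp flip: single_add)
  have "subst_monom Var k = (\<Prod>v\<in>Poly_Mapping.keys k.
      Poly_Mapping.single (Poly_Mapping.single v (Poly_Mapping.lookup k v)) 1)"
    by (simp add: subst_monom_def Var_power)
  also have "\<dots> = Poly_Mapping.single
      (\<Sum>v\<in>Poly_Mapping.keys k. Poly_Mapping.single v (Poly_Mapping.lookup k v)) 1"
    by (induction rule: infinite_finite_induct) (auto simp: mult_single)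
  also have "\<dots> = Poly_Mapping.single k 1"
    by (simp flip: poly_mapping_sum_single)
  finally show ?thesis .
qed

lemma subst_superset:
  assumes "finite K" "Poly_Mapping.keys p \<subseteq> K"
  shows "subst \<sigma> p = (\<Sum>k\<in>K. Const (Poly_Mapping.lookup p k) * subst_monom \<sigma> k)"
  unfolding subst_def
  by (rule sum.mono_neutral_left) (use assms in \<open>auto simp: in_keys_iff\<close>)

lemma subst_zero [simp]: "subst \<sigma> 0 = 0"
  by (simp add: subst_def)

lemma subst_add: "subst \<sigma> (p + q) = subst \<sigma> p + subst \<sigma> q"
proof -
  let ?K = "Poly_Mapping.keys p \<union> Poly_Mapping.keys q"
  have "subst \<sigma> (p + q) = (\<Sum>k\<in>?K. Const (Poly_Mapping.lookup (p + q) k) * subst_monom \<sigma> k)"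
    by (rule subst_superset) (simp_all add: keys_add)
  also have "\<dots> = (\<Sum>k\<in>?K. Const (Poly_Mapping.lookup p k) * subst_monom \<sigma> k)
      + (\<Sum>k\<in>?K. Const (Poly_Mapping.lookup q k) * subst_monom \<sigma> k)"
    by (simp add: lookup_add Const_add distrib_right sum.distrib)
  also have "\<dots> = subst \<sigma> p + subst \<sigma> q"
    by (simp add: subst_superset[of ?K])
  finally show ?thesis .
qed

lemma subst_sum: "subst \<sigma> (sum f A) = (\<Sum>x\<in>A. subst \<sigma> (f x))"
  by (induction A rule: infinite_finite_induct) (auto simp: subst_add)

lemma subst_uminus: "subst \<sigma> (- p) = - subst \<sigma> p"
  using subst_add[of \<sigma> "- p" p] by (simp add: eq_neg_iff_add_eq_0)

lemma subst_diff: "subst \<sigma> (p - q) = subst \<sigma> p - subst \<sigma> q"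
  using subst_add[of \<sigma> p "- q"] by (simp add: subst_uminus)

lemma subst_single: "subst \<sigma> (Poly_Mapping.single k c) = Const c * subst_monom \<sigma> k"
  by (cases "c = 0") (auto simp: subst_def)

lemma subst_mult: "subst \<sigma> (p * q) = subst \<sigma> p * subst \<sigma> q"
proof -
  have "p * q = (\<Sum>a\<in>Poly_Mapping.keys p. \<Sum>b\<in>Poly_Mapping.keys q.
      Poly_Mapping.single (a + b) (Poly_Mapping.lookup p a * Poly_Mapping.lookup q b))"
    by (subst (1 2) poly_mapping_sum_single) (simp add: sum_product mult_single)
  then have "subst \<sigma> (p * q) = (\<Sum>a\<in>Poly_Mapping.keys p. \<Sum>b\<in>Poly_Mapping.keys q.
      (Const (Poly_Mapping.lookup p a) * subst_monom \<sigma> a)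
        * (Const (Poly_Mapping.lookup q b) * subst_monom \<sigma> b))"
    by (simp add: subst_sum subst_single subst_monom_add flip: Const_mult; simp add: ac_simps)
  also have "\<dots> = subst \<sigma> p * subst \<sigma> q"
    by (simp add: subst_def sum_product)
  finally show ?thesis .
qed

lemma subst_Const [simp]: "subst \<sigma> (Const c) = Const c"
  by (simp add: Const_def subst_single subst_monom_def)

lemma subst_one [simp]: "subst \<sigma> 1 = 1"
  using subst_Const[of \<sigma> 1] by simp

lemma subst_numeral [simp]: "subst \<sigma> (numeral n) = numeral n"
  using subst_Const[of \<sigma> "numeral n"] by simp

lemma subst_Var [simp]: "subst \<sigma> (Var v) = \<sigma> v"
  by (simp add: Var_def subst_single subst_monom_def Const_def)

definition mpolys :: "(nat \<times> nat) set \<Rightarrow> 'a::comm_ring_1 mpoly set" where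
  "mpolys V = {p. \<forall>k\<in>Poly_Mapping.keys p. Poly_Mapping.keys k \<subseteq> V}"

lemma carrier_poly_ring [simp]: "carrier (poly_ring V) = mpolys V"
  by (simp add: poly_ring_def mpolys_def)

lemma poly_ring_simps [simp]:
  "monoid.mult (poly_ring V) = (*)" "one (poly_ring V) = 1"
  "ring.zero (poly_ring V) = 0" "ring.add (poly_ring V) = (+)"
  by (simp_all add: poly_ring_def)

lemma mpolys_zero [simp]: "0 \<in> mpolys V"
  by (simp add: mpolys_def)

lemma mpolys_Const [simp, intro]: "Const c \<in> mpolys V"
  by (simp add: mpolys_def Const_def)

lemma mpolys_one [simp]: "1 \<in> mpolys V"
  using mpolys_Const[of 1] by simp

lemma mpolys_numeral [simp, intro]: "numeral n \<in> mpolys V"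
  using mpolys_Const[of "numeral n"] by simp

lemma mpolys_Var [simp, intro]: "v \<in> V \<Longrightarrow> Var v \<in> mpolys V"
  by (simp add: mpolys_def Var_def)

lemma Xmat_in_mpolys [simp, intro]: "(i, j) \<in> V \<Longrightarrow> Xmat i j \<in> mpolys V"
  by (simp add: Xmat_def)

lemma mpolys_add [simp, intro]: "p \<in> mpolys V \<Longrightarrow> q \<in> mpolys V \<Longrightarrow> p + q \<in> mpolys V"
  using keys_add[of p q] by (auto simp: mpolys_def)

lemma mpolys_uminus [simp, intro]: "p \<in> mpolys V \<Longrightarrow> - p \<in> mpolys V"
  by (simp add: mpolys_def)

lemma mpolys_diff [simp, intro]: "p \<in> mpolys V \<Longrightarrow> q \<in> mpolys V \<Longrightarrow> p - q \<in> mpolys V"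
  using mpolys_add[of p V "- q"] by simp

lemma mpolys_mult [simp, intro]: "p \<in> mpolys V \<Longrightarrow> q \<in> mpolys V \<Longrightarrow> p * q \<in> mpolys V"
proof -
  assume p: "p \<in> mpolys V" and q: "q \<in> mpolys V"
  have "Poly_Mapping.keys k \<subseteq> V" if k: "k \<in> Poly_Mapping.keys (p * q)" for k
  proof -
    obtain a b where "a \<in> Poly_Mapping.keys p" "b \<in> Poly_Mapping.keys q" "k = a + b"
      using keys_mult k by blast
    then show ?thesis using p q keys_add[of a b] unfolding mpolys_def by blast
  qed
  then show ?thesis by (simp add: mpolys_def)
qed

lemma mpolys_sum [simp, intro]: "(\<And>x. x \<in> A \<Longrightarrow> f x \<in> mpolys V) \<Longrightarrow> sum f A \<in> mpolys V"
  by (induction A rule: infinite_finite_induct) auto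

lemma mpolys_prod [intro]: "(\<And>x. x \<in> A \<Longrightarrow> f x \<in> mpolys V) \<Longrightarrow> prod f A \<in> mpolys V"
  by (induction A rule: infinite_finite_induct) auto

lemma mpolys_power [intro]: "p \<in> mpolys V \<Longrightarrow> p ^ n \<in> mpolys V"
  by (induction n) auto

lemma mpolys_mono: "V \<subseteq> W \<Longrightarrow> mpolys V \<subseteq> mpolys W"
  unfolding mpolys_def by blast

lemma cring_poly_ring: "cring (poly_ring V :: 'a::comm_ring_1 mpoly ring)"
proof -
  have "\<exists>y\<in>mpolys V. y + x = 0" if "x \<in> mpolys V" for x :: "'a mpoly"
    using that by (intro bexI[of _ "- x"]) auto
  then show ?thesis
    by unfold_locales (auto simp: algebra_simps Units_def)
qed

lemma subst_in_mpolys: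
  assumes "p \<in> mpolys W" "\<And>v. v \<in> W \<Longrightarrow> \<sigma> v \<in> mpolys V"
  shows "subst \<sigma> p \<in> mpolys V"
  using assms unfolding subst_def subst_monom_def mpolys_def[of W]
  by (intro mpolys_sum mpolys_mult mpolys_prod mpolys_power) blast+

lemma subst_ring_hom:
  assumes "\<And>v. v \<in> V \<Longrightarrow> \<sigma> v \<in> mpolys W"
  shows "subst \<sigma> \<in> ring_hom (poly_ring V) (poly_ring W :: 'a::comm_ring_1 mpoly ring)"
  by (rule ring_hom_memI) (auto simp: subst_add subst_mult intro: subst_in_mpolys assms)

lemma subst_fixes:
  assumes "p \<in> mpolys V" "\<And>v. v \<in> V \<Longrightarrow> \<sigma> v = Var v"
  shows "subst \<sigma> p = p"
proof -
  have "subst \<sigma> p = (\<Sum>k\<in>Poly_Mapping.keys p. Const (Poly_Mapping.lookup p k) * subst_monom Var k)"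
    using assms unfolding subst_def subst_monom_def mpolys_def
    by (intro sum.cong arg_cong2[where f = "(*)"] prod.cong) (auto dest!: bspec)
  also have "\<dots> = p"
    by (subst (2) poly_mapping_sum_single) (simp add: subst_monom_Var Const_def mult_single)
  finally show ?thesis .
qed

section \<open>Ideals generated by a set\<close>

text \<open>A commutative ring is a module over itself; the span of a set is then the ideal it generates.\<close>

interpretation ideal: Modules.module "(*) :: 'a::comm_ring_1 \<Rightarrow> 'a \<Rightarrow> 'a"
  by unfold_locales (simp_all add: algebra_simps)

declare ideal.scale_scale [simp del] \<comment> \<open>reversed associativity of (*); it loops with \<open>ac_simps\<close>\<close>

lemma span_prod_diff:
  "(\<And>x. x \<in> A \<Longrightarrow> f x - g x \<in> ideal.span G) \<Longrightarrow> prod f A - prod g A \<in> ideal.span G"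
proof (induction A rule: infinite_finite_induct)
  case (insert x F)
  have "prod f (insert x F) - prod g (insert x F)
      = prod f F * (f x - g x) + g x * (prod f F - prod g F)"
    using insert by (simp add: algebra_simps)
  then show ?case
    using insert by (metis insertI1 insertI2 ideal.span_add ideal.span_scale)
qed (auto simp: ideal.span_zero)

lemma span_power_diff: "a - b \<in> ideal.span G \<Longrightarrow> a ^ n - b ^ n \<in> ideal.span G"
  using span_prod_diff[of "{..<n}" "\<lambda>_. a" "\<lambda>_. b" G] by simp

lemma span_subst_diff:
  assumes "p \<in> mpolys V" "\<And>v. v \<in> V \<Longrightarrow> Var v - \<sigma> v \<in> ideal.span G"
  shows "p - subst \<sigma> p \<in> ideal.span G"
proof -
  have "p - subst \<sigma> p = subst Var p - subst \<sigma> p"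
    using assms(1) by (simp add: subst_fixes)
  also have "\<dots> = (\<Sum>k\<in>Poly_Mapping.keys p.
      Const (Poly_Mapping.lookup p k) * (subst_monom Var k - subst_monom \<sigma> k))"
    by (simp add: subst_def sum_subtractf right_diff_distrib)
  also have "\<dots> \<in> ideal.span G"
    using assms unfolding subst_monom_def mpolys_def
    by (intro ideal.span_sum ideal.span_scale span_prod_diff span_power_diff) auto
  finally show ?thesis .
qed

text \<open>Setting the variables outside V to 0 is a ring homomorphism onto the polynomials in V
  which fixes every generator.\<close>

lemma span_in_genideal:
  fixes G :: "'a::comm_ring_1 mpoly set"
  assumes G: "G \<subseteq> mpolys V" and a: "a \<in> ideal.span G" "a \<in> mpolys V"
  shows "a \<in> Idl\<^bsub>poly_ring V\<^esub> G"
proof -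
  interpret R: cring "poly_ring V" by (rule cring_poly_ring)
  interpret I: ideal "Idl\<^bsub>poly_ring V\<^esub> G" "poly_ring V"
    by (rule R.genideal_ideal) (use G in simp)
  define \<rho> :: "'a mpoly \<Rightarrow> 'a mpoly" where "\<rho> = subst (\<lambda>v. if v \<in> V then Var v else 0)"
  have \<rho>_in: "\<rho> p \<in> mpolys V" for p
    unfolding \<rho>_def by (rule subst_in_mpolys[where W = UNIV]) (auto simp: mpolys_def[of UNIV])
  have \<rho>_fix: "p \<in> mpolys V \<Longrightarrow> \<rho> p = p" for p
    unfolding \<rho>_def by (rule subst_fixes) auto
  from a(1) have "\<rho> a \<in> Idl\<^bsub>poly_ring V\<^esub> G"
  proof (induction rule: ideal.span_induct_alt)
    case base
    show ?case by (simp add: \<rho>_def I.zero_closed[simplified])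
  next
    case (step c x y)
    have "\<rho> x \<in> Idl\<^bsub>poly_ring V\<^esub> G"
      using step(1) G R.genideal_self[of G] \<rho>_fix by (auto simp: subset_iff)
    then have "\<rho> c * \<rho> x \<in> Idl\<^bsub>poly_ring V\<^esub> G"
      using I.I_l_closed[of "\<rho> x" "\<rho> c"] \<rho>_in by simp
    then show ?case
      using I.a_closed[of "\<rho> c * \<rho> x" "\<rho> y"] step(2) by (simp add: \<rho>_def subst_add subst_mult)
  qed
  then show ?thesis using \<rho>_fix[OF a(2)] by simp
qed

section \<open>Eliminating variables from a presentation\<close>

locale var_elimination =
  fixes V W :: "(nat \<times> nat) set" and \<sigma> :: "nat \<times> nat \<Rightarrow> 'a::comm_ring_1 mpoly"
    and G G' :: "'a mpoly set"
  assumes vars_subset: "W \<subseteq> V"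
    and gens_in: "G \<subseteq> mpolys V" and gens'_in: "G' \<subseteq> mpolys W"
    and subst_in: "\<And>v. v \<in> V \<Longrightarrow> \<sigma> v \<in> mpolys W"
    and subst_fixes_vars: "\<And>v. v \<in> W \<Longrightarrow> \<sigma> v = Var v"
    and subst_gens: "\<And>g. g \<in> G \<Longrightarrow> subst \<sigma> g \<in> ideal.span G'"
    and gens'_span: "\<And>g. g \<in> G' \<Longrightarrow> g \<in> ideal.span G"
    and Var_subst_span: "\<And>v. v \<in> V \<Longrightarrow> Var v - \<sigma> v \<in> ideal.span G"
begin

abbreviation (input) "R \<equiv> poly_ring V :: 'a mpoly ring"
abbreviation (input) "R' \<equiv> poly_ring W :: 'a mpoly ring"
abbreviation (input) "I \<equiv> Idl\<^bsub>R\<^esub> G"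
abbreviation (input) "I' \<equiv> Idl\<^bsub>R'\<^esub> G'"

lemma mpolys_W_V: "mpolys W \<subseteq> mpolys V"
  by (rule mpolys_mono[OF vars_subset])

sublocale R: cring R by (rule cring_poly_ring)
sublocale R': cring R' by (rule cring_poly_ring)
sublocale I: ideal I R by (rule R.genideal_ideal) (use gens_in in simp)
sublocale I': ideal I' R' by (rule R'.genideal_ideal) (use gens'_in in simp)

lemma subst_hom: "subst \<sigma> \<in> ring_hom R R'"
  by (rule subst_ring_hom[OF subst_in])

lemma subst_genideal: "subst \<sigma> ` I \<subseteq> I'"
proof -
  interpret \<phi>: ring_hom_ring R R' "subst \<sigma>"
    by (rule ring_hom_ringI2[OF R.ring_axioms R'.ring_axioms subst_hom])
  have "I \<subseteq> {x \<in> carrier R. subst \<sigma> x \<in> I'}"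
  proof (rule R.genideal_minimal)
    show "ideal {x \<in> carrier R. subst \<sigma> x \<in> I'} R"
      by (rule \<phi>.ideal_vimage) (rule I'.ideal_axioms)
    show "G \<subseteq> {x \<in> carrier R. subst \<sigma> x \<in> I'}"
      using gens_in subst_in_mpolys[OF _ subst_in] span_in_genideal[OF gens'_in subst_gens]
      by auto
  qed
  then show ?thesis by auto
qed

lemma genideal'_subset: "I' \<subseteq> I"
proof -
  have "I' \<subseteq> I \<inter> carrier R'"
  proof (rule R'.genideal_minimal)
    show "ideal (I \<inter> carrier R') R'"
    proof -
      have "id \<in> ring_hom R' R"
        by (rule ring_hom_memI) (use mpolys_W_V in auto)
      then interpret \<psi>: ring_hom_ring R' R id
        by (rule ring_hom_ringI2[OF R'.ring_axioms R.ring_axioms])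
      have "I \<inter> carrier R' = {x \<in> carrier R'. id x \<in> I}" by auto
      then show ?thesis using \<psi>.ideal_vimage[OF I.ideal_axioms] by simp
    qed
    show "G' \<subseteq> I \<inter> carrier R'"
      using gens'_in mpolys_W_V span_in_genideal[OF gens_in gens'_span] by auto
  qed
  then show ?thesis by blast
qed

definition quot_map :: "'a mpoly \<Rightarrow> 'a mpoly set" where
  "quot_map x = I' +>\<^bsub>R'\<^esub> subst \<sigma> x"

lemma quot_map_hom: "quot_map \<in> ring_hom R (R' Quot I')"
  unfolding quot_map_def using ring_hom_trans[OF subst_hom I'.rcos_ring_hom] by (simp add: comp_def)

lemma quot_map_surj: "quot_map ` carrier R = carrier (R' Quot I')"
proof
  show "quot_map ` carrier R \<subseteq> carrier (R' Quot I')"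
    using ring_hom_memE(1)[OF quot_map_hom] by auto
  show "carrier (R' Quot I') \<subseteq> quot_map ` carrier R"
  proof
    fix Q assume "Q \<in> carrier (R' Quot I')"
    then obtain y where y: "y \<in> mpolys W" "Q = I' +>\<^bsub>R'\<^esub> y"
      unfolding FactRing_def A_RCOSETS_def RCOSETS_def a_r_coset_def by auto
    then have "Q = quot_map y"
      unfolding quot_map_def using subst_fixes[OF y(1) subst_fixes_vars] by simp
    then show "Q \<in> quot_map ` carrier R" using y mpolys_W_V by auto
  qed
qed

lemma quot_map_kernel: "a_kernel R (R' Quot I') quot_map = I"
proof
  show "a_kernel R (R' Quot I') quot_map \<subseteq> I"
  proof
    fix x assume "x \<in> a_kernel R (R' Quot I') quot_map"
    then have x: "x \<in> mpolys V" and "quot_map x = I'"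
      unfolding a_kernel_def' by (auto simp: FactRing_def)
    have sx: "subst \<sigma> x \<in> mpolys W"
      using x subst_in by (intro subst_in_mpolys) auto
    then have "subst \<sigma> x \<in> I"
      using \<open>quot_map x = I'\<close> I'.rcos_const_imp_mem genideal'_subset
      unfolding quot_map_def by auto
    moreover have "x - subst \<sigma> x \<in> I"
      using span_in_genideal[OF gens_in span_subst_diff[OF x Var_subst_span]] x sx mpolys_W_V
      by auto
    ultimately show "x \<in> I"
      using I.a_closed[of "x - subst \<sigma> x" "subst \<sigma> x"] by simp
  qed
  show "I \<subseteq> a_kernel R (R' Quot I') quot_map"
  proof
    fix x assume "x \<in> I"
    then have "x \<in> carrier R" "subst \<sigma> x \<in> I'"
      using I.Icarr subst_genideal by auto
    then show "x \<in> a_kernel R (R' Quot I') quot_map"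
      unfolding a_kernel_def' quot_map_def using I'.a_rcos_const by (auto simp: FactRing_def)
  qed
qed

theorem O_alg_iso_subst: "\<exists>h. O_alg_iso R I R' I' h"
proof -
  interpret \<Phi>: ring_hom_ring R "R' Quot I'" quot_map
    by (rule ring_hom_ringI2[OF R.ring_axioms I'.quotient_is_ring quot_map_hom])
  define h where "h = (\<lambda>C. the_elem (quot_map ` C))"
  have "h \<in> ring_iso (R Quot I) (R' Quot I')"
    using \<Phi>.FactRing_iso_set[OF quot_map_surj] unfolding quot_map_kernel h_def .
  moreover have "h (I +>\<^bsub>R\<^esub> Const c) = I' +>\<^bsub>R'\<^esub> Const c" for c
    using \<Phi>.the_elem_simp[of "Const c"] quot_map_kernel by (simp add: h_def quot_map_def)
  ultimately show ?thesis unfolding O_alg_iso_def by blast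
qed

end

definition cong_mod :: "'a::comm_ring_1 set \<Rightarrow> 'a \<Rightarrow> 'a \<Rightarrow> bool" where
  "cong_mod G x y \<longleftrightarrow> x - y \<in> ideal.span G"

lemma cong_mod_refl [simp]: "cong_mod G x x"
  by (simp add: cong_mod_def ideal.span_zero)

lemma cong_mod_sym: "cong_mod G x y \<Longrightarrow> cong_mod G y x"
  unfolding cong_mod_def using ideal.span_neg[of "x - y" G] by simp

lemma cong_mod_trans [trans]: "cong_mod G x y \<Longrightarrow> cong_mod G y z \<Longrightarrow> cong_mod G x z"
  unfolding cong_mod_def using ideal.span_add[of "x - y" G "y - z"] by simp

text \<open>Mixed transitivity rules for calculations; without them Isar falls back on higher-order
  substitution, which is very slow on the large sums below.\<close>

lemma cong_mod_eq_trans [trans]: "cong_mod G x y \<Longrightarrow> y = z \<Longrightarrow> cong_mod G x z"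
  by simp

lemma eq_cong_mod_trans [trans]: "x = y \<Longrightarrow> cong_mod G y z \<Longrightarrow> cong_mod G x z"
  by simp

lemma cong_mod_zero_iff: "cong_mod G x 0 \<longleftrightarrow> x \<in> ideal.span G"
  by (simp add: cong_mod_def)

lemma cong_mod_add: "cong_mod G a b \<Longrightarrow> cong_mod G c e \<Longrightarrow> cong_mod G (a + c) (b + e)"
  unfolding cong_mod_def using ideal.span_add[of "a - b" G "c - e"] by (simp add: algebra_simps)

lemma cong_mod_diff: "cong_mod G a b \<Longrightarrow> cong_mod G c e \<Longrightarrow> cong_mod G (a - c) (b - e)"
  unfolding cong_mod_def using ideal.span_diff[of "a - b" G "c - e"] by (simp add: algebra_simps)

lemma cong_mod_uminus: "cong_mod G a b \<Longrightarrow> cong_mod G (- a) (- b)"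
  using cong_mod_diff[of G 0 0 a b] by simp

lemma cong_mod_mult_left: "cong_mod G a b \<Longrightarrow> cong_mod G (c * a) (c * b)"
  unfolding cong_mod_def using ideal.span_scale[of "a - b" G c] by (simp add: algebra_simps)

lemma cong_mod_mult_right: "cong_mod G a b \<Longrightarrow> cong_mod G (a * c) (b * c)"
  using cong_mod_mult_left[of G a b c] by (simp add: mult.commute)

lemma cong_mod_mult: "cong_mod G a b \<Longrightarrow> cong_mod G c e \<Longrightarrow> cong_mod G (a * c) (b * e)"
  using cong_mod_mult_left cong_mod_mult_right cong_mod_trans by blast

lemma cong_mod_sum:
  "(\<And>x. x \<in> A \<Longrightarrow> cong_mod G (f x) (g x)) \<Longrightarrow> cong_mod G (sum f A) (sum g A)"
  unfolding cong_mod_def by (simp add: ideal.span_sum flip: sum_subtractf)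

lemma cong_mod_if_zero: "cong_mod G a b \<Longrightarrow> cong_mod G (if c then a else 0) (if c then b else 0)"
  by simp

lemma cong_mod_factor_left:
  "cong_mod G a b \<Longrightarrow> x = c * a \<Longrightarrow> y = c * b \<Longrightarrow> cong_mod G x y"
  using cong_mod_mult_left by blast

lemma cong_mod_factor_right:
  "cong_mod G a b \<Longrightarrow> x = a * c \<Longrightarrow> y = b * c \<Longrightarrow> cong_mod G x y"
  using cong_mod_mult_right by blast

lemma cong_mod_zero_trans: "cong_mod G a b \<Longrightarrow> cong_mod G b 0 \<Longrightarrow> a \<in> ideal.span G"
  using cong_mod_trans cong_mod_zero_iff by blast

lemma mmul_Jmat_right:
  assumes "b \<in> {1..k}"
  shows "mmul k M (Jmat k) a b = (M a (k + 1 - b) :: 'b::comm_ring_1)"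
proof -
  have "mmul k M (Jmat k) a b = (\<Sum>t\<in>{1..k}. if t = k + 1 - b then M a t else 0)"
    unfolding mmul_def Jmat_def by (rule sum.cong) (use assms in auto)
  then show ?thesis using assms by (auto simp: sum.delta)
qed

lemma mmul_Jmat_left:
  assumes "a \<in> {1..k}"
  shows "mmul k (Jmat k) N a b = (N (k + 1 - a) b :: 'b::comm_ring_1)"
proof -
  have "mmul k (Jmat k) N a b = (\<Sum>t\<in>{1..k}. if t = k + 1 - a then N t b else 0)"
    unfolding mmul_def Jmat_def by (rule sum.cong) (use assms in auto)
  then show ?thesis using assms by (auto simp: sum.delta)
qed

section \<open>The block decomposition of the index set\<close>

locale blocks =
  fixes d m l :: nat
  assumes dim: "d = l + 2 * m"
begin

abbreviation Mid :: "nat set" where "Mid \<equiv> Zset d m"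
abbreviation Out :: "nat set" where "Out \<equiv> Zc d m"
abbreviation Low :: "nat set" where "Low \<equiv> {1..m}"
abbreviation Up :: "nat set" where "Up \<equiv> {m + l + 1..d}"

definition flip :: "nat \<Rightarrow> nat" where
  "flip x = d + 1 - x"

lemma Mid_eq: "Mid = {m + 1..m + l}"
  by (simp add: Zset_def dim)

lemma Out_eq: "Out = Low \<union> Up"
  by (auto simp: Zc_def Zset_def dim)

lemma Mid_Out_disjoint: "x \<in> Out \<Longrightarrow> x \<notin> Mid"
  and Out_Mid_disjoint: "x \<in> Mid \<Longrightarrow> x \<notin> Out"
  by (simp_all add: Zc_def)

lemma finite_Mid [simp]: "finite Mid" and finite_Out [simp]: "finite Out"
  by (simp_all add: Zset_def Zc_def)

lemma Mid_Out_cover: "{1..d} = Mid \<union> Out"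
  by (auto simp: Zc_def Zset_def)

lemma Mid_or_Out: "x \<in> {1..d} \<Longrightarrow> x \<in> Mid \<or> x \<in> Out"
  by (auto simp: Zc_def)

lemma Mid_Out_cases: "x \<in> {1..d} \<Longrightarrow> (x \<in> Mid \<Longrightarrow> P) \<Longrightarrow> (x \<in> Out \<Longrightarrow> P) \<Longrightarrow> P"
  by (auto simp: Zc_def)

lemma Mid_range: "x \<in> Mid \<Longrightarrow> x \<in> {1..d}"
  and Out_range: "x \<in> Out \<Longrightarrow> x \<in> {1..d}"
  and Low_Out: "x \<in> Low \<Longrightarrow> x \<in> Out"
  and Up_Out: "x \<in> Up \<Longrightarrow> x \<in> Out"
  by (auto simp: Zc_def Zset_def dim)

lemma flip_flip [simp]: "x \<le> d \<Longrightarrow> flip (flip x) = x"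
  by (simp add: flip_def)

lemma flip_range: "x \<in> {1..d} \<Longrightarrow> flip x \<in> {1..d}"
  and flip_Mid: "x \<in> Mid \<Longrightarrow> flip x \<in> Mid"
  and flip_Out: "x \<in> Out \<Longrightarrow> flip x \<in> Out"
  and flip_Low: "x \<in> Low \<Longrightarrow> flip x \<in> Up"
  and flip_Up: "x \<in> Up \<Longrightarrow> flip x \<in> Low"
  unfolding flip_def by (auto simp: Zc_def Zset_def dim)

lemma flip_flip_Mid [simp]: "x \<in> Mid \<Longrightarrow> flip (flip x) = x"
  and flip_flip_Out [simp]: "x \<in> Out \<Longrightarrow> flip (flip x) = x"
  and flip_flip_Up [simp]: "x \<in> Up \<Longrightarrow> flip (flip x) = x"
  using Mid_range Out_range Up_Out by auto

lemma flip_image: "flip ` Mid = Mid" "flip ` Low = Up"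
proof -
  have img: "flip ` A = B" if "\<And>x. x \<in> A \<Longrightarrow> flip x \<in> B" "\<And>x. x \<in> B \<Longrightarrow> flip x \<in> A"
    "\<And>x. x \<in> B \<Longrightarrow> flip (flip x) = x" for A B
    using that by (force intro: image_eqI[of _ flip "flip _"])
  show "flip ` Mid = Mid" by (rule img) (simp_all add: flip_Mid)
  show "flip ` Low = Up" by (rule img) (simp_all only: flip_Low flip_Up flip_flip_Up)
qed

lemma sum_flip_swap:
  assumes "A \<subseteq> {..d}" "flip ` A = B"
  shows "(\<Sum>t\<in>A. f t (flip t)) = (\<Sum>t\<in>B. f (flip t) t)"
proof -
  have inj: "inj_on flip A"
    using assms(1) by (intro inj_onI) (auto simp: flip_def)
  have "(\<Sum>t\<in>B. f (flip t) t) = (\<Sum>t\<in>A. f (flip (flip t)) (flip t))"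
    unfolding assms(2)[symmetric] by (rule sum.reindex[OF inj, unfolded comp_def])
  also have "\<dots> = (\<Sum>t\<in>A. f t (flip t))"
    using assms(1) by (intro sum.cong) auto
  finally show ?thesis by simp
qed

lemma sum_Mid_flip_swap: "(\<Sum>t\<in>Mid. f t (flip t)) = (\<Sum>t\<in>Mid. f (flip t) t)"
  by (rule sum_flip_swap[OF _ flip_image(1)]) (use Mid_range in force)

lemma sum_Low_flip_swap: "(\<Sum>t\<in>Low. f t (flip t)) = (\<Sum>t\<in>Up. f (flip t) t)"
  by (rule sum_flip_swap[OF _ flip_image(2)]) (simp add: dim)

lemma sum_Out_split: "(\<Sum>x\<in>Out. f x) = (\<Sum>x\<in>Low. f x) + (\<Sum>x\<in>Up. f x)"
  unfolding Out_eq by (rule sum.union_disjoint) auto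

lemma sum_Mid_Out_split: "(\<Sum>x\<in>{1..d}. f x) = (\<Sum>x\<in>Mid. f x) + (\<Sum>x\<in>Out. f x)"
  unfolding Mid_Out_cover by (rule sum.union_disjoint) (auto simp: Zc_def)

lemma sum_Mid_shift: "(\<Sum>a\<in>{1..l}. f (m + a)) = (\<Sum>s\<in>Mid. f s)"
proof -
  have "(\<Sum>s\<in>Mid. f s) = (\<Sum>s\<in>{1 + m..l + m}. f s)" by (simp add: Mid_eq ac_simps)
  also have "\<dots> = (\<Sum>a\<in>{1..l}. f (a + m))" by (rule sum.shift_bounds_cl_nat_ivl)
  finally show ?thesis by (simp add: ac_simps)
qed

lemma Mid_shift: "a \<in> {1..l} \<Longrightarrow> m + a \<in> Mid"
  by (auto simp: Mid_eq)

lemma flip_shift: "a \<in> {1..l} \<Longrightarrow> flip (m + a) = m + (l + 1 - a)"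
  unfolding flip_def by (auto simp: dim)

end

context blocks
begin

lemma S0mat_entry:
  "i \<in> {1..d} \<Longrightarrow> t \<in> {1..d} \<Longrightarrow> S0mat d m i t = (if i \<in> Out \<and> t = flip i then 1 else 0)"
  unfolding S0mat_def flip_def by auto

lemma S1mat_entry:
  "i \<in> {1..d} \<Longrightarrow> t \<in> {1..d} \<Longrightarrow> S1mat d m i t = (if i \<in> Mid \<and> t = flip i then 1 else 0)"
  unfolding S1mat_def flip_def by auto

lemma mmul_antidiag_left:
  assumes S: "\<And>i t. i \<in> {1..d} \<Longrightarrow> t \<in> {1..d} \<Longrightarrow> S i t = (if i \<in> P \<and> t = flip i then 1 else 0)"
    and i: "i \<in> {1..d}"
  shows "mmul d S M i j = (if i \<in> P then M (flip i) j else (0::'b::comm_ring_1))"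
proof -
  have "mmul d S M i j = (\<Sum>t\<in>{1..d}. if t = flip i then (if i \<in> P then M t j else 0) else 0)"
    unfolding mmul_def by (rule sum.cong) (use S i in auto)
  then show ?thesis using flip_range[OF i] by (simp add: sum.delta)
qed

lemma mmul_antidiag_quadratic:
  assumes S: "\<And>i t. i \<in> {1..d} \<Longrightarrow> t \<in> {1..d} \<Longrightarrow> S i t = (if i \<in> P \<and> t = flip i then 1 else 0)"
    and P: "P \<subseteq> {1..d}" "\<And>x. x \<in> P \<Longrightarrow> flip x \<in> P"
  shows "mmul d (mmul d (mtr M) S) N i j = (\<Sum>y\<in>P. M (flip y) i * (N y j :: 'b::comm_ring_1))"
proof -
  have S_transpose: "mtr S y x = (if y \<in> P \<and> x = flip y then 1 else 0)"
    if "x \<in> {1..d}" "y \<in> {1..d}" for x y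
    using that S P unfolding mtr_def by (auto simp: flip_def)
  have "mmul d (mtr M) S i y = (if y \<in> P then M (flip y) i else 0)" if y: "y \<in> {1..d}" for y
    using mmul_antidiag_left[of "mtr S" P y M i, OF S_transpose y]
    unfolding mmul_def mtr_def by (simp add: mult.commute)
  then have "mmul d (mmul d (mtr M) S) N i j
      = (\<Sum>y\<in>{1..d}. if y \<in> P then M (flip y) i * N y j else 0)"
    unfolding mmul_def[of d "mmul d (mtr M) S"] by (intro sum.cong) auto
  also have "\<dots> = (\<Sum>y\<in>P. M (flip y) i * N y j)"
    using sum.inter_restrict[of "{1..d}" "\<lambda>y. M (flip y) i * N y j" P] P by (simp add: Int_absorb1)
  finally show ?thesis .
qed

lemma mmul_S0mat_left: "i \<in> {1..d} \<Longrightarrow> mmul d (S0mat d m) M i j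
    = (if i \<in> Out then M (flip i) j else 0)"
  by (rule mmul_antidiag_left[OF S0mat_entry])

lemma mmul_S1mat_left: "i \<in> {1..d} \<Longrightarrow> mmul d (S1mat d m) M i j
    = (if i \<in> Mid then M (flip i) j else 0)"
  by (rule mmul_antidiag_left[OF S1mat_entry])

lemma quadratic_S0mat: "mmul d (mmul d (mtr M) (S0mat d m)) N i j = (\<Sum>y\<in>Out. M (flip y) i * N y j)"
  by (rule mmul_antidiag_quadratic[OF S0mat_entry]) (use Out_range flip_Out in auto)

lemma quadratic_S1mat: "mmul d (mmul d (mtr M) (S1mat d m)) N i j = (\<Sum>y\<in>Mid. M (flip y) i * N y j)"
  by (rule mmul_antidiag_quadratic[OF S1mat_entry]) (use Mid_range flip_Mid in auto)

lemma B2_J_B1t_entry: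
  assumes "a \<in> {1..l}" "b \<in> {1..l}"
  shows "mmul m (mmul m (\<lambda>a c. F (m + a) (m + l + c)) (Jmat m)) (mtr (\<lambda>a c. F (m + a) c)) a b
       = (\<Sum>k\<in>Up. F (m + a) k * (F (m + b) (flip k) :: 'b::comm_ring_1))"
proof -
  have "mmul m (mmul m (\<lambda>a c. F (m + a) (m + l + c)) (Jmat m)) (mtr (\<lambda>a c. F (m + a) c)) a b
      = (\<Sum>c\<in>Low. F (m + a) (flip c) * F (m + b) c)"
    unfolding mmul_def[of m "mmul m _ _"] mtr_def
  proof (rule sum.cong[OF refl])
    fix c assume c: "c \<in> {1..m}"
    then have "m + l + (m + 1 - c) = flip c" unfolding flip_def by (simp add: dim)
    moreover have "mmul m (\<lambda>a c. F (m + a) (m + l + c)) (Jmat m) a c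
        = F (m + a) (m + l + (m + 1 - c))"
      by (rule mmul_Jmat_right[OF c])
    ultimately show "mmul m (\<lambda>a c. F (m + a) (m + l + c)) (Jmat m) a c * F (m + b) c
        = F (m + a) (flip c) * F (m + b) c"
      by simp
  qed
  also have "\<dots> = (\<Sum>k\<in>Up. F (m + a) k * F (m + b) (flip k))"
    by (rule sum_Low_flip_swap)
  finally show ?thesis .
qed

end

section \<open>Expressing all entries of X through the block (B1|B2)\<close>

locale B_elimination = blocks +
  fixes \<pi> half :: "'a::comm_ring_1"
  assumes half: "2 * half = 1"
begin

abbreviation gens_I :: "'a mpoly set" where
  "gens_I \<equiv> I_naive_gens d m \<pi> \<union> I_add_gens d m l \<pi>"

abbreviation gens_B :: "'a mpoly set" where
  "gens_B \<equiv> I_dd_gens d m l \<pi>"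

abbreviation B2JB1t :: "nat \<Rightarrow> nat \<Rightarrow> 'a mpoly" where
  "B2JB1t \<equiv> mmul m (mmul m (B2blk m l) (Jmat m)) (mtr (B1blk m))"

abbreviation S0_gen :: "nat \<Rightarrow> nat \<Rightarrow> 'a mpoly" where
  "S0_gen i j \<equiv> mmul d (mmul d (mtr Xmat) (S0mat d m)) Xmat i j
     - 2 * Const \<pi> * (mmul d (S0mat d m) Xmat i j + Const \<pi> * mmul d (S1mat d m) Xmat i j)"

abbreviation S1_gen :: "nat \<Rightarrow> nat \<Rightarrow> 'a mpoly" where
  "S1_gen i j \<equiv> mmul d (mmul d (mtr Xmat) (S1mat d m)) Xmat i j
     + 2 * (mmul d (S0mat d m) Xmat i j + Const \<pi> * mmul d (S1mat d m) Xmat i j)"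

abbreviation AJ_gen :: "nat \<Rightarrow> nat \<Rightarrow> 'a mpoly" where
  "AJ_gen a b \<equiv> mmul l (Ablk m) (Jmat l) a b - mmul l (Jmat l) (mtr (Ablk m)) a b"

abbreviation B2JB1t_gen :: "nat \<Rightarrow> nat \<Rightarrow> 'a mpoly" where
  "B2JB1t_gen a b \<equiv> B2JB1t a b - mmul l (Ablk m) (Jmat l) a b"

text \<open>In global indices, A = B2 J B1^t J becomes the following polynomial in the entries of B.\<close>

definition A_of_B :: "nat \<Rightarrow> nat \<Rightarrow> 'a mpoly" where
  "A_of_B s j = (\<Sum>k\<in>Up. Xmat s k * Xmat (flip j) (flip k))"

definition BJB :: "nat \<Rightarrow> nat \<Rightarrow> 'a mpoly" where
  "BJB x y = (\<Sum>t\<in>Mid. Xmat t x * Xmat (flip t) y)"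

definition trA :: "'a mpoly" where
  "trA = (\<Sum>s\<in>Mid. A_of_B s s)"

definition Ymid :: "nat \<Rightarrow> nat \<Rightarrow> 'a mpoly" where
  "Ymid s j = (if j \<in> Mid then A_of_B s j else Xmat s j)"

text \<open>The rows of X outside the middle are solved from the rows of X^t S1 X + 2(S0 X + \<pi> S1 X)
  indexed by Out, using that 2 is invertible.\<close>

definition Y :: "nat \<Rightarrow> nat \<Rightarrow> 'a mpoly" where
  "Y i j = (if i \<in> Mid then Ymid i j
            else - (Const half * (\<Sum>s\<in>Mid. Xmat (flip s) (flip i) * Ymid s j)))"

lemma half_two: "Const half * 2 = 1"
  using half by (metis Const_1 Const_mult Const_numeral mult.commute)

lemma half_double: "Const half * (2 * x) = x"
  by (simp add: half_two flip: mult.assoc)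

text \<open>Stated in the normal forms that \<open>algebra_simps\<close> produces.\<close>

lemma half_numeral:
  "Const half * 2 = 1" "Const half * (2 * z) = z" "Const half * (4 * z) = 2 * z"
  "Const half * (Const half * (4 * z)) = z"
proof -
  show "Const half * 2 = 1" by (rule half_two)
  show "Const half * (2 * z) = z" by (rule half_double)
  show four: "Const half * (4 * z) = 2 * z"
    using half_double[of "2 * z"] by simp
  show "Const half * (Const half * (4 * z)) = z"
    by (simp add: four half_double)
qed

lemma trA_eq: "trA = (\<Sum>s\<in>Mid. \<Sum>k\<in>Up. Xmat s k * Xmat (flip s) (flip k))"
  by (simp add: trA_def A_of_B_def)

lemma Y_Mid_Out: "i \<in> Mid \<Longrightarrow> j \<in> Out \<Longrightarrow> Y i j = Xmat i j"
  using Mid_Out_disjoint by (simp add: Y_def Ymid_def)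

lemma A_of_B_in_mpolys: "A_of_B s j \<in> mpolys (Mid \<times> Out)"
  if "s \<in> Mid" "j \<in> Mid"
  unfolding A_of_B_def using that flip_Mid flip_Up Up_Out Low_Out by auto

lemma Y_in_mpolys: "i \<in> {1..d} \<Longrightarrow> j \<in> {1..d} \<Longrightarrow> Y i j \<in> mpolys (Mid \<times> Out)"
  unfolding Y_def Ymid_def
  by (elim Mid_Out_cases; force intro!: mpolys_sum mpolys_mult A_of_B_in_mpolys intro: flip_Mid
    flip_Out)

lemma trA_in_mpolys: "trA \<in> mpolys (Mid \<times> Out)"
  unfolding trA_def using A_of_B_in_mpolys by auto

lemma B2JB1t_entry:
  assumes "a \<in> {1..l}" "b \<in> {1..l}"
  shows "B2JB1t a b = (\<Sum>k\<in>Up. Xmat (m + a) k * Xmat (m + b) (flip k))"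
proof -
  have B2: "B2blk m l = (\<lambda>a c. Xmat (m + a) (m + l + c))" and B1: "B1blk m = (\<lambda>a c. Xmat (m + a) c)"
    by (simp_all add: fun_eq_iff B2blk_def B1blk_def)
  show ?thesis unfolding B2 B1 by (rule B2_J_B1t_entry[OF assms])
qed

lemma AJ_entry:
  "a \<in> {1..l} \<Longrightarrow> b \<in> {1..l} \<Longrightarrow> mmul l (Ablk m) (Jmat l) a b = Xmat (m + a) (flip (m + b))"
  by (simp add: mmul_Jmat_right Ablk_def flip_shift)

lemma JAt_entry:
  "a \<in> {1..l} \<Longrightarrow> b \<in> {1..l} \<Longrightarrow> mmul l (Jmat l) (mtr (Ablk m)) a b = Xmat (m + b) (flip (m + a))"
  by (simp add: mmul_Jmat_left Ablk_def mtr_def flip_shift)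

lemma trace_gen_eq: "(\<Sum>a\<in>{1..l}. mmul l B2JB1t (Jmat l) a a) + 2 * Const \<pi> = trA + 2 * Const \<pi>"
proof -
  have "mmul l B2JB1t (Jmat l) a a = A_of_B (m + a) (m + a)" if a: "a \<in> {1..l}" for a
  proof -
    have "mmul l B2JB1t (Jmat l) a a = B2JB1t a (l + 1 - a)"
      by (rule mmul_Jmat_right[OF a])
    also have "\<dots> = A_of_B (m + a) (m + a)"
    proof -
      have "l + 1 - a \<in> {1..l}" using a by auto
      then show ?thesis using B2JB1t_entry[OF a] by (simp add: A_of_B_def flip_shift[OF a])
    qed
    finally show ?thesis .
  qed
  then show ?thesis
    by (simp add: trA_def sum_Mid_shift[where f = "\<lambda>s. A_of_B s s", symmetric])
qed

lemma minor_in_gens_I: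
  "1 \<le> i \<Longrightarrow> i < t \<Longrightarrow> t \<le> d \<Longrightarrow> 1 \<le> j \<Longrightarrow> j < s \<Longrightarrow> s \<le> d \<Longrightarrow>
   Xmat i j * Xmat t s - Xmat i s * Xmat t j \<in> gens_I"
  unfolding I_naive_gens_def by blast

lemma S1_gen_in_gens_I: "i \<in> {1..d} \<Longrightarrow> j \<in> {1..d} \<Longrightarrow> S1_gen i j \<in> gens_I"
  unfolding I_naive_gens_def by blast

lemma trace_A_in_gens_I: "(\<Sum>a\<in>{1..l}. Ablk m a a) + 2 * Const \<pi> \<in> gens_I"
  unfolding I_add_gens_def by blast

lemma B2JB1t_gen_in_gens_I:
  "a \<in> {1..l} \<Longrightarrow> b \<in> {1..l} \<Longrightarrow> B2JB1t_gen a b \<in> gens_I"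
  unfolding I_add_gens_def by blast

lemma minor_in_span_I:
  assumes "i \<in> {1..d}" "t \<in> {1..d}" "j \<in> {1..d}" "s \<in> {1..d}"
  shows "Xmat i j * Xmat t s - Xmat i s * Xmat t j \<in> ideal.span gens_I"
proof -
  let ?D = "\<lambda>i t j s. Xmat i j * Xmat t s - Xmat i s * Xmat t j :: 'a mpoly"
  have cols: "?D i t j s \<in> ideal.span gens_I"
    if "i < t" "i \<in> {1..d}" "t \<in> {1..d}" "j \<in> {1..d}" "s \<in> {1..d}" for i t j s
  proof (cases rule: linorder_cases[of j s])
    case less
    then show ?thesis using that by (intro ideal.span_base minor_in_gens_I) auto
  next
    case equal
    then show ?thesis by (simp add: ideal.span_zero)
  next
    case greater
    then have "?D i t s j \<in> ideal.span gens_I"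
      using that by (intro ideal.span_base minor_in_gens_I) auto
    then show ?thesis using ideal.span_neg by (fastforce simp: algebra_simps)
  qed
  show ?thesis
  proof (cases rule: linorder_cases[of i t])
    case less
    then show ?thesis using cols assms by blast
  next
    case equal
    then show ?thesis by (simp add: ideal.span_zero ac_simps)
  next
    case greater
    then have "?D t i j s \<in> ideal.span gens_I" using cols assms by blast
    then show ?thesis using ideal.span_neg by (fastforce simp: algebra_simps)
  qed
qed

lemma trace_in_span_I: "trA + 2 * Const \<pi> \<in> ideal.span gens_I"
proof -
  have "mmul l B2JB1t (Jmat l) a a = B2JB1t_gen a (l + 1 - a) + Ablk m a a"
    if a: "a \<in> {1..l}" for a
  proof -
    have "l + 1 - a \<in> {1..l}" using a by auto
    then show ?thesis using a by (simp add: mmul_Jmat_right)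
  qed
  then have "(\<Sum>a\<in>{1..l}. mmul l B2JB1t (Jmat l) a a) + 2 * Const \<pi>
      = (\<Sum>a\<in>{1..l}. B2JB1t_gen a (l + 1 - a))
        + ((\<Sum>a\<in>{1..l}. Ablk m a a) + 2 * Const \<pi>)"
    by (simp add: sum.distrib add.assoc)
  also have "\<dots> \<in> ideal.span gens_I"
    by (intro ideal.span_add ideal.span_sum ideal.span_base B2JB1t_gen_in_gens_I
        trace_A_in_gens_I) auto
  finally show ?thesis by (simp only: trace_gen_eq)
qed

lemma Var_minus_A_of_B_in_span_I:
  assumes "i \<in> Mid" "j \<in> Mid"
  shows "Var (i, j) - A_of_B i j \<in> ideal.span gens_I"
proof -
  obtain a b where a: "a \<in> {1..l}" "i = m + a" and b: "b \<in> {1..l}" "flip j = m + b"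
    using assms flip_Mid[OF assms(2)] unfolding Mid_eq
    by (metis add.commute atLeastAtMost_iff le_add_diff_inverse2 nat_add_left_cancel_le
        nat_le_linear not_less_eq_eq plus_1_eq_Suc)
  have "flip (m + b) = j"
    using b(2) flip_flip_Mid[OF assms(2)] by simp
  then have "B2JB1t_gen a b = A_of_B i j - Var (i, j)"
    using a b by (simp add: B2JB1t_entry AJ_entry A_of_B_def Xmat_def)
  then have "A_of_B i j - Var (i, j) \<in> ideal.span gens_I"
    using ideal.span_base[OF B2JB1t_gen_in_gens_I[OF a(1) b(1)]] by simp
  from ideal.span_neg[OF this] show ?thesis by simp
qed

lemma Ymid_minus_Xmat_in_span_I: "s \<in> Mid \<Longrightarrow> Ymid s j - Xmat s j \<in> ideal.span gens_I"
  using ideal.span_neg[OF Var_minus_A_of_B_in_span_I, of s j]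
  by (auto simp: Ymid_def Xmat_def ideal.span_zero)

lemma Var_minus_Y_in_span_I:
  assumes i: "i \<in> {1..d}" and j: "j \<in> {1..d}"
  shows "Var (i, j) - Y i j \<in> ideal.span gens_I"
proof (cases "i \<in> Mid")
  case True
  then show ?thesis
    using ideal.span_neg[OF Ymid_minus_Xmat_in_span_I[OF True, of j]] by (simp add: Y_def Xmat_def)
next
  case False
  then have out: "i \<in> Out" using i Mid_Out_cover by blast
  have fi: "flip i \<in> {1..d}" "flip i \<in> Out" using flip_range[OF i] flip_Out[OF out] by auto
  let ?E = "S1_gen (flip i) j"
  let ?S = "\<lambda>f. \<Sum>s\<in>Mid. Xmat (flip s) (flip i) * f s"
  have E: "?E = ?S (\<lambda>s. Xmat s j) + 2 * Xmat i j"
    using fi out Mid_Out_disjoint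
    by (simp add: quadratic_S1mat mmul_S0mat_left mmul_S1mat_left mtr_def)
  have "Var (i, j) - Y i j = Xmat i j + Const half * ?S (\<lambda>s. Ymid s j)"
    using False by (simp add: Y_def Xmat_def)
  moreover have "Const half * ?E = Const half * ?S (\<lambda>s. Xmat s j) + Xmat i j"
    unfolding E by (simp add: distrib_left half_double)
  moreover have "?S (\<lambda>s. Ymid s j - Xmat s j) = ?S (\<lambda>s. Ymid s j) - ?S (\<lambda>s. Xmat s j)"
    by (simp add: right_diff_distrib sum_subtractf)
  ultimately have "Var (i, j) - Y i j = Const half * ?E + Const half * ?S (\<lambda>s. Ymid s j - Xmat s j)"
    by (simp add: right_diff_distrib)
  also have "\<dots> \<in> ideal.span gens_I"
    using fi(1) j
    by (intro ideal.span_add ideal.span_scale ideal.span_sum ideal.span_base S1_gen_in_gens_I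
        Ymid_minus_Xmat_in_span_I)
  finally show ?thesis .
qed

lemma gens_I_in_mpolys: "gens_I \<subseteq> mpolys ({1..d} \<times> {1..d})"
proof -
  let ?V = "{1..d} \<times> {1..d}"
  have ranges: "\<And>y. y \<in> Out \<Longrightarrow> Suc 0 \<le> y \<and> y \<le> d" "\<And>y. y \<in> Mid \<Longrightarrow> Suc 0 \<le> y \<and> y \<le> d"
    "\<And>y. y \<in> Out \<Longrightarrow> Suc 0 \<le> flip y \<and> flip y \<le> d" "\<And>y. y \<in> Mid \<Longrightarrow> Suc 0 \<le> flip y \<and> flip y \<le> d"
    "\<And>y. Suc 0 \<le> y \<Longrightarrow> y \<le> d \<Longrightarrow> Suc 0 \<le> flip y \<and> flip y \<le> d"
    "\<And>y. y \<in> Up \<Longrightarrow> Suc 0 \<le> flip y \<and> flip y \<le> d"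
    "\<And>a. Suc 0 \<le> a \<Longrightarrow> a \<le> l \<Longrightarrow> Suc 0 \<le> m + a \<and> m + a \<le> d"
    "\<And>a. Suc 0 \<le> a \<Longrightarrow> a \<le> l \<Longrightarrow> Suc 0 \<le> flip (m + a) \<and> flip (m + a) \<le> d"
    using flip_range Mid_range Out_range Up_Out Mid_shift flip_Mid by (auto simp: dim)
  have "g \<in> mpolys ?V" if "g \<in> gens_I" for g
    using that unfolding I_naive_gens_def I_add_gens_def
  proof (elim UnE CollectE exE conjE)
    fix i j assume "g = mmul d Xmat Xmat i j" "i \<in> {1..d}" "j \<in> {1..d}"
    then show ?thesis unfolding mmul_def by auto
  next
    fix i j assume "g = S0_gen i j"
      "i \<in> {1..d}" "j \<in> {1..d}"
    then show ?thesis
      by (auto simp: quadratic_S0mat mmul_S0mat_left mmul_S1mat_left mtr_def ranges)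
  next
    fix i j assume "g = S1_gen i j"
      "i \<in> {1..d}" "j \<in> {1..d}"
    then show ?thesis
      by (auto simp: quadratic_S1mat mmul_S0mat_left mmul_S1mat_left mtr_def ranges)
  next
    fix a b assume "g = AJ_gen a b"
      "a \<in> {1..l}" "b \<in> {1..l}"
    then show ?thesis by (auto simp: AJ_entry JAt_entry ranges)
  next
    fix a b assume "g = B2JB1t_gen a b" "a \<in> {1..l}" "b \<in> {1..l}"
    then show ?thesis by (auto simp: AJ_entry B2JB1t_entry ranges intro!: mpolys_sum)
  qed (auto simp: Ablk_def ranges intro!: mpolys_sum)
  then show ?thesis by blast
qed

lemma gens_B_in_mpolys: "gens_B \<subseteq> mpolys (Mid \<times> Out)"
proof -
  have "(\<Sum>a\<in>{1..l}. mmul l B2JB1t (Jmat l) a a) + 2 * Const \<pi> \<in> mpolys (Mid \<times> Out)"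
    unfolding trace_gen_eq using trA_in_mpolys by simp
  then show ?thesis unfolding I_dd_gens_def by auto
qed

end

lemma subst_case_prod_Xmat [simp]: "subst (case_prod F) (Xmat i j) = F i j"
  by (simp add: Xmat_def)

section \<open>The substitution respects the relations, modulo the rank-one and trace relations\<close>

locale B_elimination_mod = B_elimination +
  fixes G :: "'a mpoly set"
  assumes minor_cong:
      "\<And>s t x y. s \<in> Mid \<Longrightarrow> t \<in> Mid \<Longrightarrow> x \<in> Out \<Longrightarrow> y \<in> Out \<Longrightarrow>
        cong_mod G (Xmat s x * Xmat t y) (Xmat s y * Xmat t x)"
    and trace_cong: "cong_mod G trA (- (2 * Const \<pi>))"
begin

abbreviation cong_G :: "'a mpoly \<Rightarrow> 'a mpoly \<Rightarrow> bool" (infix "\<doteq>" 50) where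
  "x \<doteq> y \<equiv> cong_mod G x y"

text \<open>A normal form of Y modulo (G): on the outer rows, the rank-one relations collapse the
  defining sums.\<close>

definition Y' :: "nat \<Rightarrow> nat \<Rightarrow> 'a mpoly" where
  "Y' i j = (if i \<in> Mid then Ymid i j
             else if j \<in> Mid then Const \<pi> * Xmat (flip j) (flip i)
             else - (Const half * BJB (flip i) j))"

text \<open>Entry (i, j) of X^t S0 X - 2\<pi>(S0 X + \<pi> S1 X) and of X^t S1 X + 2(S0 X + \<pi> S1 X),
  with X replaced by the matrix M.\<close>

definition S0_rel :: "(nat \<Rightarrow> nat \<Rightarrow> 'a mpoly) \<Rightarrow> nat \<Rightarrow> nat \<Rightarrow> 'a mpoly" where
  "S0_rel M i j = (\<Sum>y\<in>Out. M (flip y) i * M y j)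
     - 2 * Const \<pi> * ((if i \<in> Out then M (flip i) j else 0) + Const \<pi> *
         (if i \<in> Mid then M (flip i) j else 0))"

definition S1_rel :: "(nat \<Rightarrow> nat \<Rightarrow> 'a mpoly) \<Rightarrow> nat \<Rightarrow> nat \<Rightarrow> 'a mpoly" where
  "S1_rel M i j = (\<Sum>y\<in>Mid. M (flip y) i * M y j)
     + 2 * ((if i \<in> Out then M (flip i) j else 0) + Const \<pi> *
         (if i \<in> Mid then M (flip i) j else 0))"

lemma trA_swap: "trA = (\<Sum>k\<in>Up. \<Sum>s\<in>Mid. Xmat s k * Xmat (flip s) (flip k))"
  unfolding trA_eq by (rule sum.swap)

lemma trA_flip: "trA = (\<Sum>s\<in>Mid. \<Sum>k\<in>Up. Xmat (flip s) k * Xmat s (flip k))"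
proof -
  have "trA = (\<Sum>k\<in>Up. \<Sum>s\<in>Mid. Xmat s k * Xmat (flip s) (flip k))"
    by (rule trA_swap)
  also have "\<dots> = (\<Sum>k\<in>Up. \<Sum>s\<in>Mid. Xmat (flip s) k * Xmat s (flip k))"
    by (rule sum.cong[OF refl], rule sum_Mid_flip_swap[where
      f="\<lambda>s s'. Xmat s _ * Xmat s' (flip _)"])
  also have "\<dots> = (\<Sum>s\<in>Mid. \<Sum>k\<in>Up. Xmat (flip s) k * Xmat s (flip k))"
    by (rule sum.swap)
  finally show ?thesis .
qed

lemma antidiag_BJB_sum: "(\<Sum>x\<in>Out. \<Sum>t\<in>Mid. Xmat t (flip x) * Xmat (flip t) x) = 2 * trA"
proof -
  have U: "(\<Sum>x\<in>Up. \<Sum>t\<in>Mid. Xmat t (flip x) * Xmat (flip t) x) = trA"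
  proof -
    have "(\<Sum>x\<in>Up. \<Sum>t\<in>Mid. Xmat t (flip x) * Xmat (flip t) x)
        = (\<Sum>x\<in>Up. \<Sum>t\<in>Mid. Xmat (flip t) (flip x) * Xmat t x)"
      by (rule sum.cong[OF refl], rule sum_Mid_flip_swap[where
        f="\<lambda>t t'. Xmat t (flip _) * Xmat t' _"])
    also have "\<dots> = (\<Sum>x\<in>Up. \<Sum>t\<in>Mid. Xmat t x * Xmat (flip t) (flip x))"
      by (intro sum.cong refl) (rule mult.commute)
    also have "\<dots> = trA" by (simp add: trA_swap)
    finally show ?thesis .
  qed
  have L: "(\<Sum>x\<in>Low. \<Sum>t\<in>Mid. Xmat t (flip x) * Xmat (flip t) x) = trA"
  proof -
    have "(\<Sum>x\<in>Low. \<Sum>t\<in>Mid. Xmat t (flip x) * Xmat (flip t) x)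
        = (\<Sum>x\<in>Up. \<Sum>t\<in>Mid. Xmat t x * Xmat (flip t) (flip x))"
      by (rule sum_Low_flip_swap[where f="\<lambda>x x'. \<Sum>t\<in>Mid. Xmat t x' * Xmat (flip t) x"])
    also have "\<dots> = trA" by (simp add: trA_swap)
    finally show ?thesis .
  qed
  show ?thesis using U L by (simp add: sum_Out_split)
qed

text \<open>Modulo (G) the block B = (B1|B2) has rank at most one, so B N B \<equiv> tr(N B) B for every
  matrix N; each lemma below is such an instance, obtained by applying \<open>minor_cong\<close> termwise.
  The names spell the product computed, with BJB standing for B^t J B.\<close>

lemma B_J_BJB_cong: assumes "i \<in> Mid" "j \<in> Out"
  shows "(\<Sum>x\<in>Out. Xmat i x * BJB (flip x) j) \<doteq> 2 * trA * Xmat i j"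
proof -
  have "(\<Sum>x\<in>Out. Xmat i x * BJB (flip x) j)
      = (\<Sum>x\<in>Out. \<Sum>t\<in>Mid. Xmat i x * (Xmat t (flip x) * Xmat (flip t) j))"
    by (simp add: BJB_def sum_distrib_left)
  also have "\<dots> \<doteq> (\<Sum>x\<in>Out. \<Sum>t\<in>Mid. Xmat i j * (Xmat t (flip x) * Xmat (flip t) x))"
  proof (intro cong_mod_sum)
    fix x t assume x: "x \<in> Out" and t: "t \<in> Mid"
    show "Xmat i x * (Xmat t (flip x) * Xmat (flip t) j)
        \<doteq> Xmat i j * (Xmat t (flip x) * Xmat (flip t) x)"
      by (rule cong_mod_factor_right[OF minor_cong[of i "flip t" x j], where c="Xmat t (flip x)"])
         (use assms x t flip_Mid in \<open>simp_all add: ac_simps\<close>)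
  qed
  also have "\<dots> = 2 * trA * Xmat i j"
    by (simp add: sum_distrib_left[symmetric] antidiag_BJB_sum ac_simps)
  finally show ?thesis .
qed

lemma A_B_cong: assumes "i \<in> Mid" "j \<in> Out"
  shows "(\<Sum>x\<in>Mid. A_of_B i x * Xmat x j) \<doteq> trA * Xmat i j"
proof -
  have "(\<Sum>x\<in>Mid. A_of_B i x * Xmat x j)
      = (\<Sum>x\<in>Mid. \<Sum>k\<in>Up. (Xmat i k * Xmat (flip x) (flip k)) * Xmat x j)"
    by (simp add: A_of_B_def sum_distrib_right)
  also have "\<dots> \<doteq> (\<Sum>x\<in>Mid. \<Sum>k\<in>Up. Xmat i j * (Xmat x k * Xmat (flip x) (flip k)))"
  proof (intro cong_mod_sum)
    fix x k assume x: "x \<in> Mid" and k: "k \<in> Up"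
    show "(Xmat i k * Xmat (flip x) (flip k)) * Xmat x j
        \<doteq> Xmat i j * (Xmat x k * Xmat (flip x) (flip k))"
      by (rule cong_mod_factor_right[OF minor_cong[of i x k j], where c="Xmat (flip x) (flip k)"])
         (use assms x k Up_Out in \<open>simp_all add: ac_simps\<close>)
  qed
  also have "\<dots> = Xmat i j * trA"
    by (simp only: trA_eq sum_distrib_left)
  also have "\<dots> = trA * Xmat i j" by (rule mult.commute)
  finally show ?thesis .
qed

lemma B_J_Bt_cong: assumes "i \<in> Mid" "j \<in> Mid"
  shows "(\<Sum>x\<in>Out. Xmat i x * Xmat (flip j) (flip x)) \<doteq> 2 * A_of_B i j"
proof -
  have "(\<Sum>x\<in>Out. Xmat i x * Xmat (flip j) (flip x))
      = (\<Sum>x\<in>Low. Xmat i x * Xmat (flip j) (flip x)) + A_of_B i j"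
    by (simp add: sum_Out_split A_of_B_def)
  also have "(\<Sum>x\<in>Low. Xmat i x * Xmat (flip j) (flip x))
      = (\<Sum>k\<in>Up. Xmat i (flip k) * Xmat (flip j) k)"
    by (rule sum_Low_flip_swap[where f="\<lambda>x x'. Xmat i x * Xmat (flip j) x'"])
  also have "((\<Sum>k\<in>Up. Xmat i (flip k) * Xmat (flip j) k) + A_of_B i j) \<doteq> A_of_B i j + A_of_B i j"
  proof (rule cong_mod_add[OF _ cong_mod_refl])
    show "(\<Sum>k\<in>Up. Xmat i (flip k) * Xmat (flip j) k) \<doteq> A_of_B i j"
      unfolding A_of_B_def
      by (rule cong_mod_sum, rule minor_cong) (use assms flip_Mid flip_Up Low_Out Up_Out in auto)
  qed
  also have "A_of_B i j + A_of_B i j = 2 * A_of_B i j" by simp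
  finally show ?thesis .
qed

lemma A_A_cong: assumes "i \<in> Mid" "j \<in> Mid"
  shows "(\<Sum>x\<in>Mid. A_of_B i x * A_of_B x j) \<doteq> trA * A_of_B i j"
proof -
  have "(\<Sum>x\<in>Mid. A_of_B i x * A_of_B x j)
      = (\<Sum>x\<in>Mid. \<Sum>k\<in>Up. \<Sum>k'\<in>Up. (Xmat i k * Xmat (flip x) (flip k)) *
          (Xmat x k' * Xmat (flip j) (flip k')))"
    by (simp add: A_of_B_def sum_product)
  also have "\<dots>
      \<doteq> (\<Sum>x\<in>Mid. \<Sum>k\<in>Up. \<Sum>k'\<in>Up. (Xmat x k * Xmat (flip x) (flip k)) *
          (Xmat i k' * Xmat (flip j) (flip k')))"
  proof (intro cong_mod_sum)
    fix x k k' assume x: "x \<in> Mid" and k: "k \<in> Up" and k': "k' \<in> Up"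
    show "(Xmat i k * Xmat (flip x) (flip k)) * (Xmat x k' * Xmat (flip j) (flip k'))
        \<doteq> (Xmat x k * Xmat (flip x) (flip k)) * (Xmat i k' * Xmat (flip j) (flip k'))"
      by (rule cong_mod_factor_right[OF minor_cong[of i x k k'],
          where c="Xmat (flip x) (flip k) * Xmat (flip j) (flip k')"])
         (use assms x k k' Up_Out in \<open>simp_all add: ac_simps\<close>)
  qed
  also have "\<dots> = trA * A_of_B i j"
    by (simp add: sum_distrib_left[symmetric] sum_distrib_right[symmetric] trA_eq A_of_B_def)
  finally show ?thesis .
qed

lemma Bt_J_A_cong: assumes "c \<in> Out" "j \<in> Mid"
  shows "(\<Sum>y\<in>Mid. Xmat (flip y) c * A_of_B y j) \<doteq> trA * Xmat (flip j) c"
proof -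
  have "(\<Sum>y\<in>Mid. Xmat (flip y) c * A_of_B y j)
      = (\<Sum>y\<in>Mid. \<Sum>k\<in>Up. Xmat (flip y) c * (Xmat y k * Xmat (flip j) (flip k)))"
    by (simp add: A_of_B_def sum_distrib_left)
  also have "\<dots> \<doteq> (\<Sum>y\<in>Mid. \<Sum>k\<in>Up. Xmat (flip j) c * (Xmat y k * Xmat (flip y) (flip k)))"
  proof (intro cong_mod_sum)
    fix y k assume y: "y \<in> Mid" and k: "k \<in> Up"
    show "Xmat (flip y) c * (Xmat y k * Xmat (flip j) (flip k))
        \<doteq> Xmat (flip j) c * (Xmat y k * Xmat (flip y) (flip k))"
      by (rule cong_mod_factor_right[OF minor_cong[of "flip y" "flip j" c "flip k"],
          where c="Xmat y k"])
         (use assms y k flip_Mid flip_Up Low_Out in \<open>simp_all add: ac_simps\<close>)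
  qed
  also have "\<dots> = Xmat (flip j) c * trA"
    by (simp only: trA_eq sum_distrib_left)
  also have "\<dots> = trA * Xmat (flip j) c" by (rule mult.commute)
  finally show ?thesis .
qed

lemma BJB_J_BJB_cong: assumes "a \<in> Out" "j \<in> Out"
  shows "(\<Sum>x\<in>Out. BJB a x * BJB (flip x) j) \<doteq> 2 * trA * BJB a j"
proof -
  have "(\<Sum>x\<in>Out. BJB a x * BJB (flip x) j)
      = (\<Sum>x\<in>Out. \<Sum>t\<in>Mid. \<Sum>t'\<in>Mid. (Xmat t a * Xmat (flip t) x) *
          (Xmat t' (flip x) * Xmat (flip t') j))"
    by (simp add: BJB_def sum_product)
  also have "\<dots>
      \<doteq> (\<Sum>x\<in>Out. \<Sum>t\<in>Mid. \<Sum>t'\<in>Mid. (Xmat t a * Xmat (flip t) j) *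
          (Xmat t' (flip x) * Xmat (flip t') x))"
  proof (intro cong_mod_sum)
    fix x t t' assume x: "x \<in> Out" and t: "t \<in> Mid" and t': "t' \<in> Mid"
    show "(Xmat t a * Xmat (flip t) x) * (Xmat t' (flip x) * Xmat (flip t') j)
        \<doteq> (Xmat t a * Xmat (flip t) j) * (Xmat t' (flip x) * Xmat (flip t') x)"
      by (rule cong_mod_factor_right[OF minor_cong[of "flip t" "flip t'" x j],
          where c="Xmat t a * Xmat t' (flip x)"])
         (use assms x t t' flip_Mid in \<open>simp_all add: ac_simps\<close>)
  qed
  also have "\<dots>
      = (\<Sum>t\<in>Mid. \<Sum>x\<in>Out. \<Sum>t'\<in>Mid. (Xmat t a * Xmat (flip t) j) *
          (Xmat t' (flip x) * Xmat (flip t') x))"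
    by (rule sum.swap)
  also have "\<dots> = BJB a j * (\<Sum>x\<in>Out. \<Sum>t'\<in>Mid. Xmat t' (flip x) * Xmat (flip t') x)"
    by (simp only: BJB_def sum_distrib_right, simp only: sum_distrib_left)
  also have "\<dots> = 2 * trA * BJB a j" by (simp only: antidiag_BJB_sum, simp add: ac_simps)
  finally show ?thesis .
qed

lemma BJB_J_Bt_cong: assumes "a \<in> Out" "j \<in> Mid"
  shows "(\<Sum>x\<in>Out. BJB a x * Xmat (flip j) (flip x)) \<doteq> 2 * trA * Xmat (flip j) a"
proof -
  have "(\<Sum>x\<in>Out. BJB a x * Xmat (flip j) (flip x))
      = (\<Sum>x\<in>Out. \<Sum>t\<in>Mid. (Xmat t a * Xmat (flip t) x) * Xmat (flip j) (flip x))"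
    by (simp add: BJB_def sum_distrib_right)
  also have "\<dots> \<doteq> (\<Sum>x\<in>Out. \<Sum>t\<in>Mid. Xmat (flip j) a * (Xmat t (flip x) * Xmat (flip t) x))"
  proof (intro cong_mod_sum)
    fix x t assume x: "x \<in> Out" and t: "t \<in> Mid"
    show "(Xmat t a * Xmat (flip t) x) * Xmat (flip j) (flip x)
        \<doteq> Xmat (flip j) a * (Xmat t (flip x) * Xmat (flip t) x)"
      by (rule cong_mod_factor_right[OF minor_cong[of t "flip j" a "flip x"],
          where c="Xmat (flip t) x"])
         (use assms x t flip_Mid flip_Out in \<open>simp_all add: ac_simps\<close>)
  qed
  also have "\<dots> = Xmat (flip j) a * (\<Sum>x\<in>Out. \<Sum>t\<in>Mid. Xmat t (flip x) * Xmat (flip t) x)"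
    by (simp only: sum_distrib_left)
  also have "\<dots> = 2 * trA * Xmat (flip j) a"
    by (simp only: antidiag_BJB_sum, simp add: ac_simps)
  finally show ?thesis .
qed

lemma At_J_B_cong: assumes "i \<in> Mid" "j \<in> Out"
  shows "(\<Sum>y\<in>Mid. A_of_B (flip y) i * Xmat y j) \<doteq> trA * Xmat (flip i) j"
proof -
  have "(\<Sum>y\<in>Mid. A_of_B (flip y) i * Xmat y j)
      = (\<Sum>y\<in>Mid. \<Sum>k\<in>Up. (Xmat (flip y) k * Xmat (flip i) (flip k)) * Xmat y j)"
    by (simp add: A_of_B_def sum_distrib_right)
  also have "\<dots> \<doteq> (\<Sum>y\<in>Mid. \<Sum>k\<in>Up. Xmat (flip i) j * (Xmat (flip y) k * Xmat y (flip k)))"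
  proof (intro cong_mod_sum)
    fix y k assume y: "y \<in> Mid" and k: "k \<in> Up"
    show "(Xmat (flip y) k * Xmat (flip i) (flip k)) * Xmat y j
        \<doteq> Xmat (flip i) j * (Xmat (flip y) k * Xmat y (flip k))"
      by (rule cong_mod_factor_right[OF minor_cong[of "flip i" y "flip k" j],
          where c="Xmat (flip y) k"])
         (use assms y k flip_Mid flip_Up Low_Out in \<open>simp_all add: ac_simps\<close>)
  qed
  also have "\<dots> = Xmat (flip i) j * trA"
    by (simp only: trA_flip sum_distrib_left)
  also have "\<dots> = trA * Xmat (flip i) j" by (rule mult.commute)
  finally show ?thesis .
qed

lemma At_J_A_cong: assumes "i \<in> Mid" "j \<in> Mid"
  shows "(\<Sum>y\<in>Mid. A_of_B (flip y) i * A_of_B y j) \<doteq> trA * A_of_B (flip i) j"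
proof -
  have "(\<Sum>y\<in>Mid. A_of_B (flip y) i * A_of_B y j)
      = (\<Sum>y\<in>Mid. \<Sum>k\<in>Up. \<Sum>k'\<in>Up. (Xmat (flip y) k * Xmat (flip i) (flip k)) *
          (Xmat y k' * Xmat (flip j) (flip k')))"
    by (simp add: A_of_B_def sum_product)
  also have "\<dots>
      \<doteq> (\<Sum>y\<in>Mid. \<Sum>k\<in>Up. \<Sum>k'\<in>Up. (Xmat (flip y) k * Xmat y (flip k)) *
          (Xmat (flip i) k' * Xmat (flip j) (flip k')))"
  proof (intro cong_mod_sum)
    fix y k k' assume y: "y \<in> Mid" and k: "k \<in> Up" and k': "k' \<in> Up"
    show "(Xmat (flip y) k * Xmat (flip i) (flip k)) * (Xmat y k' * Xmat (flip j) (flip k'))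
        \<doteq> (Xmat (flip y) k * Xmat y (flip k)) * (Xmat (flip i) k' * Xmat (flip j) (flip k'))"
      by (rule cong_mod_factor_right[OF minor_cong[of "flip i" y "flip k" k'],
          where c="Xmat (flip y) k * Xmat (flip j) (flip k')"])
         (use assms y k k' flip_Mid flip_Up Low_Out Up_Out in \<open>simp_all add: ac_simps\<close>)
  qed
  also have "\<dots> = trA * A_of_B (flip i) j"
    by (simp add: sum_distrib_left[symmetric] sum_distrib_right[symmetric] trA_flip A_of_B_def)
  finally show ?thesis .
qed

lemma Y_Out_Out: assumes "i \<in> Out" "j \<in> Out" shows "Y i j = - (Const half * BJB (flip i) j)"
proof -
  have "Y i j = - (Const half * (\<Sum>s\<in>Mid. Xmat (flip s) (flip i) * Xmat s j))"
    using assms Mid_Out_disjoint by (simp add: Y_def Ymid_def)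
  also have "(\<Sum>s\<in>Mid. Xmat (flip s) (flip i) * Xmat s j) = BJB (flip i) j"
    unfolding BJB_def by (rule sum_Mid_flip_swap[where f="\<lambda>s s'. Xmat s' (flip i) * Xmat s j"])
  finally show ?thesis .
qed

lemma Y_Out_Mid_cong: assumes "i \<in> Out" "j \<in> Mid" shows "Y i j \<doteq> Const \<pi> * Xmat (flip j) (flip i)"
proof -
  have "Y i j = - (Const half * (\<Sum>y\<in>Mid. Xmat (flip y) (flip i) * A_of_B y j))"
    using assms Mid_Out_disjoint by (simp add: Y_def Ymid_def)
  also have "\<dots> \<doteq> - (Const half * (trA * Xmat (flip j) (flip i)))"
    by (intro cong_mod_uminus cong_mod_mult_left Bt_J_A_cong) (use assms flip_Out in auto)
  also have "\<dots> \<doteq> - (Const half * ((- (2 * Const \<pi>)) * Xmat (flip j) (flip i)))"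
    by (intro cong_mod_uminus cong_mod_mult_left cong_mod_mult_right trace_cong)
  also have "\<dots> = Const \<pi> * Xmat (flip j) (flip i)"
    using half_double[of "Const \<pi> * Xmat (flip j) (flip i)"] by (simp add: ac_simps)
  finally show ?thesis .
qed

lemma Y_cong_Y': assumes "i \<in> {1..d}" "j \<in> {1..d}" shows "Y i j \<doteq> Y' i j"
proof (cases "i \<in> Mid")
  case True then show ?thesis by (simp add: Y_def Y'_def)
next
  case False
  then have i: "i \<in> Out" using assms Mid_Out_cover by blast
  show ?thesis
  proof (cases "j \<in> Mid")
    case True then show ?thesis using Y_Out_Mid_cong[OF i True] False by (simp add: Y'_def)
  next
    case False
    then have "j \<in> Out" using assms Mid_Out_cover by blast
    then show ?thesis using Y_Out_Out[OF i] False \<open>i \<notin> Mid\<close> by (simp add: Y'_def)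
  qed
qed

lemma Y'_square_Mid_Mid:
  assumes "i \<in> Mid" "j \<in> Mid"
  shows "(\<Sum>x\<in>{1..d}. Y' i x * Y' x j) \<doteq> 0"
proof -
  have "(\<Sum>x\<in>{1..d}. Y' i x * Y' x j)
      = (\<Sum>x\<in>Mid. A_of_B i x * A_of_B x j)
        + Const \<pi> * (\<Sum>x\<in>Out. Xmat i x * Xmat (flip j) (flip x))"
    unfolding sum_Mid_Out_split using assms Mid_Out_disjoint Out_Mid_disjoint
    by (simp add: Y'_def Ymid_def sum_distrib_left ac_simps cong: sum.cong)
  also have "\<dots> \<doteq> trA * A_of_B i j + Const \<pi> * (2 * A_of_B i j)"
    by (intro cong_mod_add cong_mod_mult_left A_A_cong B_J_Bt_cong) (use assms in auto)
  also have "\<dots> \<doteq> - (2 * Const \<pi>) * A_of_B i j + Const \<pi> * (2 * A_of_B i j)"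
    by (intro cong_mod_add cong_mod_mult_right trace_cong cong_mod_refl)
  also have "\<dots> = 0"
    by (simp add: algebra_simps)
  finally show ?thesis .
qed

lemma Y'_square_Mid_Out:
  assumes "i \<in> Mid" "j \<in> Out"
  shows "(\<Sum>x\<in>{1..d}. Y' i x * Y' x j) \<doteq> 0"
proof -
  have "(\<Sum>x\<in>{1..d}. Y' i x * Y' x j)
      = (\<Sum>x\<in>Mid. A_of_B i x * Xmat x j) - Const half * (\<Sum>x\<in>Out. Xmat i x * BJB (flip x) j)"
    unfolding sum_Mid_Out_split using assms Mid_Out_disjoint Out_Mid_disjoint flip_Out
    by (simp add: Y'_def Ymid_def sum_distrib_left sum_negf ac_simps cong: sum.cong)
  also have "\<dots> \<doteq> trA * Xmat i j - Const half * (2 * trA * Xmat i j)"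
    by (intro cong_mod_diff cong_mod_mult_left A_B_cong B_J_BJB_cong) (use assms in auto)
  also have "\<dots> = 0"
    using half_double[of "trA * Xmat i j"] by (simp add: ac_simps)
  finally show ?thesis .
qed

lemma Y'_square_Out_Mid:
  assumes "i \<in> Out" "j \<in> Mid"
  shows "(\<Sum>x\<in>{1..d}. Y' i x * Y' x j) \<doteq> 0"
proof -
  have "(\<Sum>x\<in>{1..d}. Y' i x * Y' x j)
      = Const \<pi> * (\<Sum>x\<in>Mid. Xmat (flip x) (flip i) * A_of_B x j)
        - Const half * (Const \<pi> * (\<Sum>x\<in>Out. BJB (flip i) x * Xmat (flip j) (flip x)))"
    unfolding sum_Mid_Out_split using assms Mid_Out_disjoint Out_Mid_disjoint flip_Out
    by (simp add: Y'_def Ymid_def sum_distrib_left sum_negf ac_simps cong: sum.cong)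
  also have "\<dots> \<doteq> Const \<pi> * (trA * Xmat (flip j) (flip i))
      - Const half * (Const \<pi> * (2 * trA * Xmat (flip j) (flip i)))"
    by (intro cong_mod_diff cong_mod_mult_left Bt_J_A_cong BJB_J_Bt_cong)
      (use assms flip_Out in auto)
  also have "\<dots> = 0"
    by (simp add: algebra_simps half_numeral)
  finally show ?thesis .
qed

lemma Y'_square_Out_Out:
  assumes "i \<in> Out" "j \<in> Out"
  shows "(\<Sum>x\<in>{1..d}. Y' i x * Y' x j) \<doteq> 0"
proof -
  let ?Q = "BJB (flip i) j"
  have "(\<Sum>x\<in>{1..d}. Y' i x * Y' x j)
      = Const \<pi> * (\<Sum>x\<in>Mid. Xmat (flip x) (flip i) * Xmat x j)
        + Const half * (Const half * (\<Sum>x\<in>Out. BJB (flip i) x * BJB (flip x) j))"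
    unfolding sum_Mid_Out_split using assms Mid_Out_disjoint Out_Mid_disjoint flip_Out
    by (simp add: Y'_def Ymid_def sum_distrib_left ac_simps cong: sum.cong)
  also have "(\<Sum>x\<in>Mid. Xmat (flip x) (flip i) * Xmat x j) = ?Q"
    unfolding BJB_def by (rule sum_Mid_flip_swap[where f = "\<lambda>y y'. Xmat y' (flip i) * Xmat y j"])
  also have "Const \<pi> * ?Q + Const half * (Const half * (\<Sum>x\<in>Out. BJB (flip i) x * BJB (flip x) j))
      \<doteq> Const \<pi> * ?Q + Const half * (Const half * (2 * trA * ?Q))"
    by (intro cong_mod_add cong_mod_mult_left BJB_J_BJB_cong cong_mod_refl)
      (use assms flip_Out in auto)
  also have "\<dots> \<doteq> Const \<pi> * ?Q + Const half * (Const half * (2 * (- (2 * Const \<pi>)) * ?Q))"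
    by (intro cong_mod_add cong_mod_mult_left cong_mod_mult_right trace_cong cong_mod_refl)
  also have "\<dots> = 0"
    by (simp add: algebra_simps half_numeral)
  finally show ?thesis .
qed

lemma Y'_square_cong:
  assumes "i \<in> {1..d}" "j \<in> {1..d}"
  shows "(\<Sum>x\<in>{1..d}. Y' i x * Y' x j) \<doteq> 0"
  using assms by (elim Mid_Out_cases)
    (blast intro: Y'_square_Mid_Mid Y'_square_Mid_Out Y'_square_Out_Mid Y'_square_Out_Out)+

lemma A_B_minor_cong: assumes "i \<in> Mid" "t \<in> Mid" "j \<in> Mid" "s \<in> Out"
  shows "A_of_B i j * Xmat t s \<doteq> Xmat i s * A_of_B t j"
proof -
  have "A_of_B i j * Xmat t s = (\<Sum>k\<in>Up. (Xmat i k * Xmat (flip j) (flip k)) * Xmat t s)"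
    by (simp add: A_of_B_def sum_distrib_right)
  also have "\<dots> \<doteq> (\<Sum>k\<in>Up. Xmat i s * (Xmat t k * Xmat (flip j) (flip k)))"
  proof (rule cong_mod_sum)
    fix k assume k: "k \<in> Up"
    show "(Xmat i k * Xmat (flip j) (flip k)) * Xmat t s
        \<doteq> Xmat i s * (Xmat t k * Xmat (flip j) (flip k))"
      by (rule cong_mod_factor_right[OF minor_cong[of i t k s], where c="Xmat (flip j) (flip k)"])
         (use assms k Up_Out in \<open>simp_all add: ac_simps\<close>)
  qed
  also have "\<dots> = Xmat i s * A_of_B t j" by (simp add: A_of_B_def sum_distrib_left)
  finally show ?thesis .
qed

lemma A_A_minor_cong: assumes "i \<in> Mid" "t \<in> Mid" "j \<in> Mid" "s \<in> Mid"
  shows "A_of_B i j * A_of_B t s \<doteq> A_of_B i s * A_of_B t j"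
proof -
  have "A_of_B i j * A_of_B t s
      = (\<Sum>k\<in>Up. \<Sum>k'\<in>Up. (Xmat i k * Xmat (flip j) (flip k)) *
          (Xmat t k' * Xmat (flip s) (flip k')))"
    by (simp add: A_of_B_def sum_product)
  also have "\<dots>
      \<doteq> (\<Sum>k\<in>Up. \<Sum>k'\<in>Up. (Xmat i k * Xmat (flip s) (flip k)) *
          (Xmat t k' * Xmat (flip j) (flip k')))"
  proof (intro cong_mod_sum)
    fix k k' assume k: "k \<in> Up" and k': "k' \<in> Up"
    show "(Xmat i k * Xmat (flip j) (flip k)) * (Xmat t k' * Xmat (flip s) (flip k'))
        \<doteq> (Xmat i k * Xmat (flip s) (flip k)) * (Xmat t k' * Xmat (flip j) (flip k'))"
      by (rule cong_mod_factor_right[OF minor_cong[of "flip j" "flip s" "flip k" "flip k'"],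
          where c="Xmat i k * Xmat t k'"])
         (use assms k k' flip_Mid flip_Up Low_Out in \<open>simp_all add: ac_simps\<close>)
  qed
  also have "\<dots> = A_of_B i s * A_of_B t j" by (simp add: A_of_B_def sum_product)
  finally show ?thesis .
qed

lemma B_BJB_minor_cong: assumes "i \<in> Mid" "a \<in> Out" "j \<in> Out" "s \<in> Out"
  shows "Xmat i j * BJB a s \<doteq> Xmat i s * BJB a j"
proof -
  have "Xmat i j * BJB a s = (\<Sum>u\<in>Mid. Xmat i j * (Xmat u a * Xmat (flip u) s))"
    by (simp add: BJB_def sum_distrib_left)
  also have "\<dots> \<doteq> (\<Sum>u\<in>Mid. Xmat i s * (Xmat u a * Xmat (flip u) j))"
  proof (rule cong_mod_sum)
    fix u assume u: "u \<in> Mid"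
    show "Xmat i j * (Xmat u a * Xmat (flip u) s) \<doteq> Xmat i s * (Xmat u a * Xmat (flip u) j)"
      by (rule cong_mod_factor_right[OF minor_cong[of i "flip u" j s], where c="Xmat u a"])
         (use assms u flip_Mid in \<open>simp_all add: ac_simps\<close>)
  qed
  also have "\<dots> = Xmat i s * BJB a j" by (simp add: BJB_def sum_distrib_left)
  finally show ?thesis .
qed

lemma A_BJB_cong: assumes "i \<in> Mid" "j \<in> Mid" "a \<in> Out" "s \<in> Out"
  shows "A_of_B i j * BJB a s \<doteq> trA * (Xmat i s * Xmat (flip j) a)"
proof -
  have "A_of_B i j * BJB a s
      = (\<Sum>k\<in>Up. \<Sum>u\<in>Mid. (Xmat i k * Xmat (flip j) (flip k)) * (Xmat u a * Xmat (flip u) s))"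
    by (simp add: A_of_B_def BJB_def sum_product)
  also have "\<dots>
      \<doteq> (\<Sum>k\<in>Up. \<Sum>u\<in>Mid. (Xmat i s * Xmat (flip j) a) * (Xmat (flip u) k * Xmat u (flip k)))"
  proof (intro cong_mod_sum)
    fix k u assume k: "k \<in> Up" and u: "u \<in> Mid"
    have "(Xmat i k * Xmat (flip j) (flip k)) * (Xmat u a * Xmat (flip u) s)
        \<doteq> (Xmat i s * Xmat (flip u) k) * (Xmat (flip j) (flip k) * Xmat u a)"
      by (rule cong_mod_factor_right[OF minor_cong[of i "flip u" k s],
          where c="Xmat (flip j) (flip k) * Xmat u a"])
         (use assms k u flip_Mid Up_Out in \<open>simp_all add: ac_simps\<close>)
    also have "\<dots> \<doteq> (Xmat i s * Xmat (flip j) a) * (Xmat (flip u) k * Xmat u (flip k))"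
      by (rule cong_mod_factor_right[OF minor_cong[of "flip j" u "flip k" a],
          where c="Xmat i s * Xmat (flip u) k"])
         (use assms k u flip_Mid flip_Up Low_Out in \<open>simp_all add: ac_simps\<close>)
    finally show "(Xmat i k * Xmat (flip j) (flip k)) * (Xmat u a * Xmat (flip u) s)
        \<doteq> (Xmat i s * Xmat (flip j) a) * (Xmat (flip u) k * Xmat u (flip k))" .
  qed
  also have "\<dots> = (Xmat i s * Xmat (flip j) a) * (\<Sum>k\<in>Up. \<Sum>u\<in>Mid. Xmat (flip u) k * Xmat u (flip k))"
    by (simp only: sum_distrib_left)
  also have "(\<Sum>k\<in>Up. \<Sum>u\<in>Mid. Xmat (flip u) k * Xmat u (flip k)) = trA"
    by (simp only: trA_flip, rule sum.swap)
  also have "(Xmat i s * Xmat (flip j) a) * trA = trA * (Xmat i s * Xmat (flip j) a)"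
    by (rule mult.commute)
  finally show ?thesis .
qed

lemma A_Bt_minor_cong: assumes "i \<in> Mid" "j \<in> Mid" "s \<in> Mid" "a \<in> Out"
  shows "A_of_B i j * Xmat (flip s) a \<doteq> A_of_B i s * Xmat (flip j) a"
proof -
  have "A_of_B i j * Xmat (flip s) a
      = (\<Sum>k\<in>Up. (Xmat i k * Xmat (flip j) (flip k)) * Xmat (flip s) a)"
    by (simp add: A_of_B_def sum_distrib_right)
  also have "\<dots> \<doteq> (\<Sum>k\<in>Up. (Xmat i k * Xmat (flip s) (flip k)) * Xmat (flip j) a)"
  proof (rule cong_mod_sum)
    fix k assume k: "k \<in> Up"
    show "(Xmat i k * Xmat (flip j) (flip k)) * Xmat (flip s) a
        \<doteq> (Xmat i k * Xmat (flip s) (flip k)) * Xmat (flip j) a"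
      by (rule cong_mod_factor_right[OF minor_cong[of "flip j" "flip s" "flip k" a],
          where c="Xmat i k"])
         (use assms k flip_Mid flip_Up Low_Out in \<open>simp_all add: ac_simps\<close>)
  qed
  also have "\<dots> = A_of_B i s * Xmat (flip j) a" by (simp add: A_of_B_def sum_distrib_right)
  finally show ?thesis .
qed

lemma BJB_BJB_minor_cong: assumes "a \<in> Out" "a' \<in> Out" "j \<in> Out" "s \<in> Out"
  shows "BJB a j * BJB a' s \<doteq> BJB a s * BJB a' j"
proof -
  have "BJB a j * BJB a' s
      = (\<Sum>u\<in>Mid. \<Sum>u'\<in>Mid. (Xmat u a * Xmat (flip u) j) * (Xmat u' a' * Xmat (flip u') s))"
    by (simp add: BJB_def sum_product)
  also have "\<dots> \<doteq> (\<Sum>u\<in>Mid. \<Sum>u'\<in>Mid. (Xmat u a * Xmat (flip u) s) * (Xmat u' a' * Xmat (flip u') j))"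
  proof (intro cong_mod_sum)
    fix u u' assume u: "u \<in> Mid" and u': "u' \<in> Mid"
    show "(Xmat u a * Xmat (flip u) j) * (Xmat u' a' * Xmat (flip u') s)
        \<doteq> (Xmat u a * Xmat (flip u) s) * (Xmat u' a' * Xmat (flip u') j)"
      by (rule cong_mod_factor_right[OF minor_cong[of "flip u" "flip u'" j s],
          where c="Xmat u a * Xmat u' a'"])
         (use assms u u' flip_Mid in \<open>simp_all add: ac_simps\<close>)
  qed
  also have "\<dots> = BJB a s * BJB a' j" by (simp add: BJB_def sum_product)
  finally show ?thesis .
qed

lemma Bt_BJB_minor_cong: assumes "j \<in> Mid" "a \<in> Out" "a' \<in> Out" "s \<in> Out"
  shows "Xmat (flip j) a * BJB a' s \<doteq> Xmat (flip j) a' * BJB a s"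
proof -
  have "Xmat (flip j) a * BJB a' s = (\<Sum>u\<in>Mid. Xmat (flip j) a * (Xmat u a' * Xmat (flip u) s))"
    by (simp add: BJB_def sum_distrib_left)
  also have "\<dots> \<doteq> (\<Sum>u\<in>Mid. Xmat (flip j) a' * (Xmat u a * Xmat (flip u) s))"
  proof (rule cong_mod_sum)
    fix u assume u: "u \<in> Mid"
    show "Xmat (flip j) a * (Xmat u a' * Xmat (flip u) s)
        \<doteq> Xmat (flip j) a' * (Xmat u a * Xmat (flip u) s)"
      by (rule cong_mod_factor_right[OF minor_cong[of "flip j" u a a'], where c="Xmat (flip u) s"])
         (use assms u flip_Mid in \<open>simp_all add: ac_simps\<close>)
  qed
  also have "\<dots> = Xmat (flip j) a' * BJB a s" by (simp add: BJB_def sum_distrib_left)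
  finally show ?thesis .
qed

lemma Y'_Mid_Mid: "i \<in> Mid \<Longrightarrow> j \<in> Mid \<Longrightarrow> Y' i j = A_of_B i j"
  and Y'_Mid_Out: "i \<in> Mid \<Longrightarrow> j \<in> Out \<Longrightarrow> Y' i j = Xmat i j"
  and Y'_Out_Mid: "i \<in> Out \<Longrightarrow> j \<in> Mid \<Longrightarrow> Y' i j = Const \<pi> * Xmat (flip j) (flip i)"
  and Y'_Out_Out: "i \<in> Out \<Longrightarrow> j \<in> Out \<Longrightarrow> Y' i j = - (Const half * BJB (flip i) j)"
  using Mid_Out_disjoint by (auto simp: Y'_def Ymid_def)

lemmas Y'_simps = Y'_Mid_Mid Y'_Mid_Out Y'_Out_Mid Y'_Out_Out

lemma Y'_minor_cong_mixed:
  assumes "i \<in> Mid" "t \<in> Out" "j \<in> Mid" "s \<in> Out"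
  shows "Y' i j * Y' t s \<doteq> Y' i s * Y' t j"
proof -
  have "Y' i j * Y' t s = - (Const half * (A_of_B i j * BJB (flip t) s))"
    using assms by (simp add: Y'_simps)
  also have "\<dots> \<doteq> - (Const half * (trA * (Xmat i s * Xmat (flip j) (flip t))))"
    by (intro cong_mod_uminus cong_mod_mult_left A_BJB_cong) (use assms flip_Out in auto)
  also have "\<dots> \<doteq> - (Const half * ((- (2 * Const \<pi>)) * (Xmat i s * Xmat (flip j) (flip t))))"
    by (intro cong_mod_uminus cong_mod_mult_left cong_mod_mult_right trace_cong)
  also have "\<dots> = Const \<pi> * (Xmat i s * Xmat (flip j) (flip t))"
    using half_double[of "Const \<pi> * (Xmat i s * Xmat (flip j) (flip t))"] by (simp add: ac_simps)
  also have "\<dots> = Y' i s * Y' t j"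
    using assms by (simp add: Y'_simps ac_simps)
  finally show ?thesis .
qed

lemma Y'_minor_cong_ordered:
  assumes "i \<in> {1..d}" "t \<in> {1..d}" "j \<in> {1..d}" "s \<in> {1..d}"
    and "i \<in> Mid \<or> t \<in> Out" and "j \<in> Mid \<or> s \<in> Out"
  shows "Y' i j * Y' t s \<doteq> Y' i s * Y' t j"
proof -
  \<comment> \<open>In the case names, M and O give the blocks containing i, t, j, s.\<close>
  have MMMM: "i \<in> Mid \<Longrightarrow> t \<in> Mid \<Longrightarrow> j \<in> Mid \<Longrightarrow> s \<in> Mid \<Longrightarrow> ?thesis"
    by (simp add: Y'_simps A_A_minor_cong)
  have MMMO: "i \<in> Mid \<Longrightarrow> t \<in> Mid \<Longrightarrow> j \<in> Mid \<Longrightarrow> s \<in> Out \<Longrightarrow> ?thesis"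
    by (simp add: Y'_simps A_B_minor_cong)
  have MMOO: "i \<in> Mid \<Longrightarrow> t \<in> Mid \<Longrightarrow> j \<in> Out \<Longrightarrow> s \<in> Out \<Longrightarrow> ?thesis"
    by (simp add: Y'_simps minor_cong)
  have MOMM: "i \<in> Mid \<Longrightarrow> t \<in> Out \<Longrightarrow> j \<in> Mid \<Longrightarrow> s \<in> Mid \<Longrightarrow> ?thesis"
    by (simp add: Y'_simps,
        rule cong_mod_factor_left[OF A_Bt_minor_cong[of i j s "flip t"], where c = "Const \<pi>"])
      (simp_all add: flip_Out ac_simps)
  have MOMO: "i \<in> Mid \<Longrightarrow> t \<in> Out \<Longrightarrow> j \<in> Mid \<Longrightarrow> s \<in> Out \<Longrightarrow> ?thesis"
    by (rule Y'_minor_cong_mixed)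
  have MOOO: "i \<in> Mid \<Longrightarrow> t \<in> Out \<Longrightarrow> j \<in> Out \<Longrightarrow> s \<in> Out \<Longrightarrow> ?thesis"
    by (simp add: Y'_simps,
        rule cong_mod_factor_left[OF B_BJB_minor_cong[of i "flip t" j s], where c = "- Const half"])
      (simp_all add: flip_Out ac_simps)
  have OOMM: "i \<in> Out \<Longrightarrow> t \<in> Out \<Longrightarrow> j \<in> Mid \<Longrightarrow> s \<in> Mid \<Longrightarrow> ?thesis"
    by (simp add: Y'_simps,
        rule cong_mod_factor_left[OF minor_cong[of "flip j" "flip s" "flip i" "flip t"],
          where c = "Const \<pi> * Const \<pi>"])
      (simp_all add: flip_Out flip_Mid ac_simps)
  have OOMO: "i \<in> Out \<Longrightarrow> t \<in> Out \<Longrightarrow> j \<in> Mid \<Longrightarrow> s \<in> Out \<Longrightarrow> ?thesis"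
    by (simp add: Y'_simps,
        rule cong_mod_factor_left[OF Bt_BJB_minor_cong[of j "flip i" "flip t" s],
          where c = "- (Const \<pi> * Const half)"])
      (simp_all add: flip_Out ac_simps)
  have OOOO: "i \<in> Out \<Longrightarrow> t \<in> Out \<Longrightarrow> j \<in> Out \<Longrightarrow> s \<in> Out \<Longrightarrow> ?thesis"
    by (simp add: Y'_simps,
        rule cong_mod_factor_left[OF BJB_BJB_minor_cong[of "flip i" "flip t" j s],
          where c = "Const half * Const half"])
      (simp_all add: flip_Out ac_simps)
  show ?thesis
    using Mid_or_Out[OF assms(1)] Mid_or_Out[OF assms(2)] Mid_or_Out[OF assms(3)]
      Mid_or_Out[OF assms(4)] assms(5,6)
      MMMM MMMO MMOO MOMM MOMO MOOO OOMM OOMO OOOO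
    by blast
qed

text \<open>The remaining block patterns follow by swapping the two rows or the two columns.\<close>

lemma Y'_minor_cong:
  assumes "i \<in> {1..d}" "t \<in> {1..d}" "j \<in> {1..d}" "s \<in> {1..d}"
  shows "Y' i j * Y' t s \<doteq> Y' i s * Y' t j"
proof -
  have rows: "Y' i j * Y' t s \<doteq> Y' i s * Y' t j" if "Y' t j * Y' i s \<doteq> Y' t s * Y' i j"
    for i t j s
    using cong_mod_sym[OF that] by (simp add: ac_simps)
  have cols: "Y' i j * Y' t s \<doteq> Y' i s * Y' t j" if "Y' i s * Y' t j \<doteq> Y' i j * Y' t s"
    for i t j s
    using cong_mod_sym[OF that] .
  have "i \<in> Mid \<or> t \<in> Out \<or> (i \<in> Out \<and> t \<in> Mid)"
    and "j \<in> Mid \<or> s \<in> Out \<or> (j \<in> Out \<and> s \<in> Mid)"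
    using Mid_or_Out assms by blast+
  then show ?thesis
  proof (elim disjE conjE)
  qed (use Y'_minor_cong_ordered[OF assms] Y'_minor_cong_ordered[of t i j s]
      Y'_minor_cong_ordered[of i t s j] Y'_minor_cong_ordered[of t i s j]
      assms rows cols Out_Mid_disjoint in meson)+
qed

lemma BJB_sym: "BJB x y = BJB y x"
proof -
  have "BJB x y = (\<Sum>t\<in>Mid. Xmat (flip t) x * Xmat t y)"
    unfolding BJB_def by (rule sum_Mid_flip_swap[where f="\<lambda>t t'. Xmat t x * Xmat t' y"])
  then show ?thesis by (simp add: BJB_def mult.commute)
qed

lemma Y'_S0_rel_Mid_Mid:
  assumes "i \<in> Mid" "j \<in> Mid"
  shows "S0_rel Y' i j \<doteq> 0"
proof -
  have "S0_rel Y' i j = Const \<pi> * (Const \<pi> * (\<Sum>y\<in>Out. Xmat (flip i) y * Xmat (flip j) (flip y)))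
      - 2 * Const \<pi> * (Const \<pi> * A_of_B (flip i) j)"
    using assms flip_Out flip_Mid Out_Mid_disjoint
    by (simp add: S0_rel_def Y'_simps sum_distrib_left ac_simps cong: sum.cong)
  also have "\<dots> \<doteq> Const \<pi> * (Const \<pi> * (2 * A_of_B (flip i) j))
      - 2 * Const \<pi> * (Const \<pi> * A_of_B (flip i) j)"
    by (intro cong_mod_diff cong_mod_mult_left B_J_Bt_cong cong_mod_refl)
      (use assms flip_Mid in auto)
  also have "\<dots> = 0"
    by (simp add: algebra_simps)
  finally show ?thesis .
qed

lemma Y'_S0_rel_Mid_Out:
  assumes "i \<in> Mid" "j \<in> Out"
  shows "S0_rel Y' i j \<doteq> 0"
proof -
  let ?x = "Xmat (flip i) j"
  have "S0_rel Y' i j = - (Const \<pi> * (Const half * (\<Sum>y\<in>Out. Xmat (flip i) y * BJB (flip y) j)))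
      - 2 * Const \<pi> * (Const \<pi> * ?x)"
    using assms flip_Out flip_Mid Out_Mid_disjoint
    by (simp add: S0_rel_def Y'_simps sum_distrib_left sum_negf ac_simps cong: sum.cong)
  also have "\<dots> \<doteq> - (Const \<pi> * (Const half * (2 * trA * ?x))) - 2 * Const \<pi> * (Const \<pi> * ?x)"
    by (intro cong_mod_diff cong_mod_uminus cong_mod_mult_left B_J_BJB_cong cong_mod_refl)
      (use assms flip_Mid in auto)
  also have "\<dots> \<doteq> - (Const \<pi> * (Const half * (2 * (- (2 * Const \<pi>)) * ?x)))
      - 2 * Const \<pi> * (Const \<pi> * ?x)"
    by (intro cong_mod_diff cong_mod_uminus cong_mod_mult_left cong_mod_mult_right cong_mod_refl
        trace_cong)
  also have "\<dots> = 0"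
    by (simp add: algebra_simps half_numeral)
  finally show ?thesis .
qed

lemma Y'_S0_rel_Out_Mid:
  assumes "i \<in> Out" "j \<in> Mid"
  shows "S0_rel Y' i j \<doteq> 0"
proof -
  let ?x = "Xmat (flip j) i"
  have "S0_rel Y' i j = - (Const half * (Const \<pi> * (\<Sum>y\<in>Out. BJB i y * Xmat (flip j) (flip y))))
      - 2 * Const \<pi> * (Const \<pi> * ?x)"
    using assms flip_Out Mid_Out_disjoint
    by (simp add: S0_rel_def Y'_simps sum_distrib_left sum_negf ac_simps BJB_sym[of _ i]
        cong: sum.cong)
  also have "\<dots> \<doteq> - (Const half * (Const \<pi> * (2 * trA * ?x))) - 2 * Const \<pi> * (Const \<pi> * ?x)"
    by (intro cong_mod_diff cong_mod_uminus cong_mod_mult_left BJB_J_Bt_cong cong_mod_refl)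
      (use assms in auto)
  also have "\<dots> \<doteq> - (Const half * (Const \<pi> * (2 * (- (2 * Const \<pi>)) * ?x)))
      - 2 * Const \<pi> * (Const \<pi> * ?x)"
    by (intro cong_mod_diff cong_mod_uminus cong_mod_mult_left cong_mod_mult_right cong_mod_refl
        trace_cong)
  also have "\<dots> = 0"
    by (simp add: algebra_simps half_numeral)
  finally show ?thesis .
qed

lemma Y'_S0_rel_Out_Out:
  assumes "i \<in> Out" "j \<in> Out"
  shows "S0_rel Y' i j \<doteq> 0"
proof -
  have "S0_rel Y' i j = Const half * (Const half * (\<Sum>y\<in>Out. BJB i y * BJB (flip y) j))
      - 2 * Const \<pi> * (- (Const half * BJB i j))"
    using assms flip_Out Mid_Out_disjoint
    by (simp add: S0_rel_def Y'_simps sum_distrib_left ac_simps BJB_sym[of _ i] cong: sum.cong)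
  also have "\<dots> \<doteq> Const half * (Const half * (2 * trA * BJB i j))
      - 2 * Const \<pi> * (- (Const half * BJB i j))"
    by (intro cong_mod_diff cong_mod_mult_left BJB_J_BJB_cong cong_mod_refl) (use assms in auto)
  also have "\<dots> \<doteq> Const half * (Const half * (2 * (- (2 * Const \<pi>)) * BJB i j))
      - 2 * Const \<pi> * (- (Const half * BJB i j))"
    by (intro cong_mod_diff cong_mod_mult_left cong_mod_mult_right cong_mod_refl trace_cong)
  also have "\<dots> = 0"
    by (simp add: algebra_simps half_numeral)
  finally show ?thesis .
qed

lemma Y'_S0_rel_cong:
  assumes "i \<in> {1..d}" "j \<in> {1..d}"
  shows "S0_rel Y' i j \<doteq> 0"
  using assms by (elim Mid_Out_cases)
    (blast intro: Y'_S0_rel_Mid_Mid Y'_S0_rel_Mid_Out Y'_S0_rel_Out_Mid Y'_S0_rel_Out_Out)+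

lemma Y_S1_rel_Out:
  assumes "i \<in> Out"
  shows "S1_rel Y i j \<doteq> 0"
proof -
  let ?S = "\<Sum>y\<in>Mid. Xmat (flip y) i * Ymid y j"
  have "S1_rel Y i j = ?S + 2 * (- (Const half * ?S))"
    using assms flip_Out flip_Mid Mid_Out_disjoint Out_Mid_disjoint
    by (simp add: S1_rel_def Y_def Ymid_def cong: sum.cong)
  also have "\<dots> = 0"
    by (simp add: algebra_simps half_numeral)
  finally show ?thesis by simp
qed

lemma Y_S1_rel_Mid_Mid:
  assumes "i \<in> Mid" "j \<in> Mid"
  shows "S1_rel Y i j \<doteq> 0"
proof -
  have "S1_rel Y i j = (\<Sum>y\<in>Mid. A_of_B (flip y) i * A_of_B y j) + 2 * (Const \<pi> * A_of_B (flip i) j)"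
    using assms flip_Mid Out_Mid_disjoint by (simp add: S1_rel_def Y_def Ymid_def cong: sum.cong)
  also have "\<dots> \<doteq> trA * A_of_B (flip i) j + 2 * (Const \<pi> * A_of_B (flip i) j)"
    by (intro cong_mod_add At_J_A_cong cong_mod_refl) (use assms in auto)
  also have "\<dots> \<doteq> - (2 * Const \<pi>) * A_of_B (flip i) j + 2 * (Const \<pi> * A_of_B (flip i) j)"
    by (intro cong_mod_add cong_mod_mult_right trace_cong cong_mod_refl)
  also have "\<dots> = 0"
    by (simp add: algebra_simps)
  finally show ?thesis .
qed

lemma Y_S1_rel_Mid_Out:
  assumes "i \<in> Mid" "j \<in> Out"
  shows "S1_rel Y i j \<doteq> 0"
proof -
  have "S1_rel Y i j = (\<Sum>y\<in>Mid. A_of_B (flip y) i * Xmat y j) + 2 * (Const \<pi> * Xmat (flip i) j)"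
    using assms flip_Mid Mid_Out_disjoint Out_Mid_disjoint
    by (simp add: S1_rel_def Y_def Ymid_def cong: sum.cong)
  also have "\<dots> \<doteq> trA * Xmat (flip i) j + 2 * (Const \<pi> * Xmat (flip i) j)"
    by (intro cong_mod_add At_J_B_cong cong_mod_refl) (use assms in auto)
  also have "\<dots> \<doteq> - (2 * Const \<pi>) * Xmat (flip i) j + 2 * (Const \<pi> * Xmat (flip i) j)"
    by (intro cong_mod_add cong_mod_mult_right trace_cong cong_mod_refl)
  also have "\<dots> = 0"
    by (simp add: algebra_simps)
  finally show ?thesis .
qed

lemma Y_S1_rel_cong:
  assumes "i \<in> {1..d}" "j \<in> {1..d}"
  shows "S1_rel Y i j \<doteq> 0"
  using assms by (elim Mid_Out_cases)
    (blast intro: Y_S1_rel_Out Y_S1_rel_Mid_Mid Y_S1_rel_Mid_Out)+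

lemma Y_Mid_trace: "(\<Sum>s\<in>Mid. Y s s) = trA"
  by (simp add: Y_def Ymid_def trA_eq A_of_B_def)

lemma Y_trace_cong: "(\<Sum>i\<in>{1..d}. Y i i) \<doteq> 0"
proof -
  have "(\<Sum>i\<in>Out. Y i i) = (\<Sum>i\<in>Out. - (Const half * BJB (flip i) i))"
    by (rule sum.cong) (auto simp: Y_Out_Out)
  also have "\<dots> = - (Const half * (\<Sum>i\<in>Out. \<Sum>t\<in>Mid. Xmat t (flip i) * Xmat (flip t) i))"
    by (simp add: BJB_def sum_distrib_left sum_negf)
  also have "\<dots> = - (Const half * (2 * trA))" by (simp only: antidiag_BJB_sum)
  also have "\<dots> = - trA" by (simp only: half_double)
  finally have zc: "(\<Sum>i\<in>Out. Y i i) = - trA" .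
  have "(\<Sum>i\<in>{1..d}. Y i i) = 0" unfolding sum_Mid_Out_split by (simp add: zc Y_Mid_trace)
  then show ?thesis by simp
qed

lemma Y_Mid_trace_cong: "((\<Sum>s\<in>Mid. Y s s) + 2 * Const \<pi>) \<doteq> 0"
proof -
  have "trA + 2 * Const \<pi> \<doteq> (- (2 * Const \<pi>)) + 2 * Const \<pi>"
    by (intro cong_mod_add trace_cong cong_mod_refl)
  then show ?thesis by (simp add: Y_Mid_trace)
qed

lemma Y_AJ_symmetric_cong: assumes "s \<in> Mid" "t \<in> Mid" shows "Y s (flip t) \<doteq> Y t (flip s)"
proof -
  have "Y s (flip t) = (\<Sum>k\<in>Up. Xmat s k * Xmat t (flip k))"
    using assms flip_Mid by (simp add: Y_def Ymid_def A_of_B_def)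
  also have "\<dots> \<doteq> (\<Sum>k\<in>Up. Xmat t k * Xmat s (flip k))"
  proof (rule cong_mod_sum)
    fix k assume k: "k \<in> Up"
    show "Xmat s k * Xmat t (flip k) \<doteq> Xmat t k * Xmat s (flip k)"
      using minor_cong[of s t k "flip k"] assms k Up_Out flip_Up Low_Out by (simp add: ac_simps)
  qed
  also have "\<dots> = Y t (flip s)"
    using assms flip_Mid by (simp add: Y_def Ymid_def A_of_B_def)
  finally show ?thesis .
qed

lemma subst_X_square: assumes "i \<in> {1..d}" "j \<in> {1..d}"
  shows "subst (case_prod Y) (mmul d Xmat Xmat i j) \<in> ideal.span G"
proof (rule cong_mod_zero_trans)
  show "subst (case_prod Y) (mmul d Xmat Xmat i j) \<doteq> (\<Sum>x\<in>{1..d}. Y' i x * Y' x j)"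
    unfolding mmul_def subst_sum subst_mult subst_case_prod_Xmat
    by (intro cong_mod_sum cong_mod_mult Y_cong_Y') (use assms in auto)
  show "(\<Sum>x\<in>{1..d}. Y' i x * Y' x j) \<doteq> 0" by (rule Y'_square_cong[OF assms])
qed

lemma subst_minor: assumes "i \<in> {1..d}" "t \<in> {1..d}" "j \<in> {1..d}" "s \<in> {1..d}"
  shows "subst (case_prod Y) (Xmat i j * Xmat t s - Xmat i s * Xmat t j) \<in> ideal.span G"
proof (rule cong_mod_zero_trans)
  show "subst (case_prod Y) (Xmat i j * Xmat t s - Xmat i s * Xmat t j)
      \<doteq> Y' i j * Y' t s - Y' i s * Y' t j"
    unfolding subst_diff subst_mult subst_case_prod_Xmat
    by (intro cong_mod_diff cong_mod_mult Y_cong_Y') (use assms in auto)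
  show "Y' i j * Y' t s - Y' i s * Y' t j \<doteq> 0"
    using Y'_minor_cong[OF assms] unfolding cong_mod_def by simp
qed

lemma subst_S0_gen:
  assumes "i \<in> {1..d}" "j \<in> {1..d}"
  shows "subst (case_prod Y) (S0_gen i j) \<in> ideal.span G"
proof (rule cong_mod_zero_trans)
  have "flip i \<in> {1..d}" using flip_range assms by blast
  then show "subst (case_prod Y) (S0_gen i j) \<doteq> S0_rel Y' i j"
    unfolding S0_rel_def quadratic_S0mat mmul_S0mat_left[OF assms(1)] mmul_S1mat_left[OF assms(1)]
      subst_diff subst_mult subst_add subst_sum if_distrib[where f = "subst (case_prod Y)"]
      subst_case_prod_Xmat subst_Const subst_numeral subst_zero
    by (intro cong_mod_diff cong_mod_add cong_mod_mult_left cong_mod_sum cong_mod_mult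
        cong_mod_if_zero Y_cong_Y' cong_mod_refl)
      (use assms flip_Out Out_range in auto)
  show "S0_rel Y' i j \<doteq> 0"
    by (rule Y'_S0_rel_cong[OF assms])
qed

lemma subst_S1_gen:
  assumes "i \<in> {1..d}" "j \<in> {1..d}"
  shows "subst (case_prod Y) (S1_gen i j) \<in> ideal.span G"
proof -
  have "subst (case_prod Y) (S1_gen i j) = S1_rel Y i j"
    unfolding S1_rel_def quadratic_S1mat mmul_S0mat_left[OF assms(1)] mmul_S1mat_left[OF assms(1)]
      subst_mult subst_add subst_sum if_distrib[where f = "subst (case_prod Y)"]
      subst_case_prod_Xmat subst_Const subst_numeral subst_zero
    by simp
  then show ?thesis using Y_S1_rel_cong[OF assms] by (simp only: cong_mod_zero_iff)
qed

lemma subst_trace_X: "subst (case_prod Y) (\<Sum>i\<in>{1..d}. Xmat i i) \<in> ideal.span G"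
  using Y_trace_cong by (simp add: subst_sum cong_mod_zero_iff)

lemma subst_trace_A:
  "subst (case_prod Y) ((\<Sum>a\<in>{1..l}. Ablk m a a) + 2 * Const \<pi>) \<in> ideal.span G"
proof -
  have "subst (case_prod Y) ((\<Sum>a\<in>{1..l}. Ablk m a a) + 2 * Const \<pi>)
      = (\<Sum>s\<in>Mid. Y s s) + 2 * Const \<pi>"
    by (simp only: subst_add subst_sum subst_mult Ablk_def subst_case_prod_Xmat subst_numeral
        subst_Const sum_Mid_shift[where f = "\<lambda>s. Y s s"])
  then show ?thesis using Y_Mid_trace_cong by (simp add: cong_mod_zero_iff)
qed

lemma subst_AJ_gen:
  assumes "a \<in> {1..l}" "b \<in> {1..l}"
  shows "subst (case_prod Y) (AJ_gen a b) \<in> ideal.span G"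
proof -
  have "subst (case_prod Y) (AJ_gen a b) = Y (m + a) (flip (m + b)) - Y (m + b) (flip (m + a))"
    by (simp add: AJ_entry[OF assms] JAt_entry[OF assms] subst_diff)
  then show ?thesis
    using Y_AJ_symmetric_cong[OF Mid_shift[OF assms(1)] Mid_shift[OF assms(2)]]
    by (simp add: cong_mod_def)
qed

lemma subst_B2JB1t_gen:
  assumes "a \<in> {1..l}" "b \<in> {1..l}"
  shows "subst (case_prod Y) (B2JB1t_gen a b) \<in> ideal.span G"
proof -
  have s: "m + a \<in> Mid" "m + b \<in> Mid" "flip (m + b) \<in> Mid"
    using Mid_shift flip_Mid assms by auto
  have "subst (case_prod Y) (B2JB1t_gen a b)
      = (\<Sum>k\<in>Up. Y (m + a) k * Y (m + b) (flip k)) - Y (m + a) (flip (m + b))"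
    by (simp add: B2JB1t_entry[OF assms] AJ_entry[OF assms] subst_diff subst_sum subst_mult)
  also have "(\<Sum>k\<in>Up. Y (m + a) k * Y (m + b) (flip k))
      = (\<Sum>k\<in>Up. Xmat (m + a) k * Xmat (m + b) (flip k))"
    by (rule sum.cong[OF refl]) (use s Up_Out flip_Up Low_Out in \<open>auto simp: Y_Mid_Out\<close>)
  also have "Y (m + a) (flip (m + b)) = (\<Sum>k\<in>Up. Xmat (m + a) k * Xmat (m + b) (flip k))"
    using s by (simp add: Y_def Ymid_def A_of_B_def)
  finally show ?thesis by (simp add: ideal.span_zero)
qed

lemma subst_gens_I: "g \<in> gens_I \<Longrightarrow> subst (case_prod Y) g \<in> ideal.span G"
  unfolding I_naive_gens_def I_add_gens_def
  by (elim UnE CollectE exE conjE singletonE)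
    (simp_all only: subst_X_square subst_minor subst_S0_gen subst_S1_gen subst_trace_X
      subst_trace_A subst_AJ_gen subst_B2JB1t_gen atLeastAtMost_iff,
      (rule subst_minor; simp))

end

context B_elimination
begin

lemma B_elimination_mod_gens_B: "B_elimination_mod d m l \<pi> half gens_B"
proof unfold_locales
  fix s t x y assume "s \<in> Mid" "t \<in> Mid" "x \<in> Out" "y \<in> Out"
  then have "Xmat s x * Xmat t y - Xmat s y * Xmat t x \<in> gens_B"
    unfolding I_dd_gens_def by blast
  then show "cong_mod gens_B (Xmat s x * Xmat t y) (Xmat s y * Xmat t x)"
    unfolding cong_mod_def by (rule ideal.span_base)
next
  have "trA + 2 * Const \<pi> \<in> gens_B"
    unfolding I_dd_gens_def trace_gen_eq[symmetric] by blast
  then show "cong_mod gens_B trA (- (2 * Const \<pi>))"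
    unfolding cong_mod_def by (simp add: ideal.span_base)
qed

theorem O_alg_iso_eliminate:
  "\<exists>h. O_alg_iso (poly_ring ({1..d} \<times> {1..d})) (Idl\<^bsub>poly_ring ({1..d} \<times> {1..d})\<^esub> gens_I)
                 (poly_ring (Mid \<times> Out)) (Idl\<^bsub>poly_ring (Mid \<times> Out)\<^esub> gens_B) h"
proof -
  interpret B_elimination_mod d m l \<pi> half gens_B
    by (rule B_elimination_mod_gens_B)
  interpret var_elimination "{1..d} \<times> {1..d}" "Mid \<times> Out" "case_prod Y" gens_I gens_B
  proof
    show "Mid \<times> Out \<subseteq> {1..d} \<times> {1..d}" using Mid_range Out_range by auto
    show "gens_I \<subseteq> mpolys ({1..d} \<times> {1..d})" by (rule gens_I_in_mpolys)
    show "gens_B \<subseteq> mpolys (Mid \<times> Out)" by (rule gens_B_in_mpolys)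
    show "case_prod Y v \<in> mpolys (Mid \<times> Out)" if "v \<in> {1..d} \<times> {1..d}" for v
      using that Y_in_mpolys by auto
    show "case_prod Y v = Var v" if "v \<in> Mid \<times> Out" for v
      using that Y_Mid_Out by (auto simp: Xmat_def)
    show "subst (case_prod Y) g \<in> ideal.span gens_B" if "g \<in> gens_I" for g
      using that by (rule subst_gens_I)
    show "g \<in> ideal.span gens_I" if "g \<in> gens_B" for g
      using that unfolding I_dd_gens_def
    proof (elim UnE CollectE exE conjE)
      fix i t j s assume "g = Xmat i j * Xmat t s - Xmat i s * Xmat t j"
        "i \<in> Mid" "t \<in> Mid" "j \<in> Out" "s \<in> Out"
      then show ?thesis using minor_in_span_I Mid_range Out_range by simp
    next
      assume "g \<in> {(\<Sum>a\<in>{1..l}. mmul l B2JB1t (Jmat l) a a) + 2 * Const \<pi>}"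
      then show ?thesis using trace_in_span_I by (simp only: singleton_iff trace_gen_eq)
    qed
    show "Var v - case_prod Y v \<in> ideal.span gens_I" if "v \<in> {1..d} \<times> {1..d}" for v
      using that Var_minus_Y_in_span_I by auto
  qed
  show ?thesis by (rule O_alg_iso_subst)
qed

end

lemma breve_O_like_two_invertible:
  assumes "breve_O_like p (\<pi>\<^sub>O :: 'a::idom)"
  shows "\<exists>half :: 'a. 2 * half = 1"
proof -
  from assms have "odd p" and "CHAR('a) = 0" and "\<not> \<pi>\<^sub>O dvd 1" and "\<pi>\<^sub>O dvd of_nat p"
    and factor: "\<And>x::'a. x \<noteq> 0 \<Longrightarrow> \<exists>u k. u dvd 1 \<and> x = u * \<pi>\<^sub>O ^ k"
    unfolding breve_O_like_def by blast+
  have "(2::'a) \<noteq> 0"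
    using \<open>CHAR('a) = 0\<close> CHAR_eq0_iff[where 'a = 'a] by (metis of_nat_numeral zero_less_numeral)
  then obtain u k where u: "u dvd 1" and two: "(2::'a) = u * \<pi>\<^sub>O ^ k"
    using factor by blast
  \<comment> \<open>The uniformizer cannot divide 2, since it divides the odd prime p.\<close>
  have "k = 0"
  proof (rule ccontr)
    assume "k \<noteq> 0"
    then obtain k' where "k = Suc k'" using not0_implies_Suc by blast
    then have "\<pi>\<^sub>O dvd 2" using two by (simp add: dvd_def) (metis mult.left_commute)
    then have "\<pi>\<^sub>O dvd 2 * of_nat q" for q by simp
    moreover obtain q where "p = 2 * q + 1" using \<open>odd p\<close> oddE by blast
    then have "(of_nat p :: 'a) = 2 * of_nat q + 1" by simp
    ultimately have "\<pi>\<^sub>O dvd 1"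
      using \<open>\<pi>\<^sub>O dvd of_nat p\<close> by (metis dvd_add_right_iff)
    with \<open>\<not> \<pi>\<^sub>O dvd 1\<close> show False by blast
  qed
  then have "(2::'a) dvd 1" using two u by simp
  then show ?thesis by (auto simp: dvd_def mult.commute)
qed

theorem theorem1p2:
  fixes p :: nat and \<pi>\<^sub>O :: "'a::idom" and d l n r :: nat
  assumes "breve_O_like p \<pi>\<^sub>O"
    and "d \<ge> 5" and "2 \<le> l" and "l \<le> d - 2" and "d mod 2 = l mod 2"
    and "n = d div 2" and "r = l div 2"
  shows "\<exists>h. O_alg_iso
     (poly_ring ({1..d} \<times> {1..d}))
     (Idl\<^bsub>poly_ring ({1..d} \<times> {1..d})\<^esub> (I_naive_gens d (n - r) \<pi>\<^sub>O \<union> I_add_gens d (n - r) l \<pi>\<^sub>O))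
     (poly_ring (Zset d (n - r) \<times> Zc d (n - r)))
     (Idl\<^bsub>poly_ring (Zset d (n - r) \<times> Zc d (n - r))\<^esub> (I_dd_gens d (n - r) l \<pi>\<^sub>O))
     h"
proof -
  obtain half :: 'a where "2 * half = 1"
    using breve_O_like_two_invertible[OF assms(1)] by blast
  moreover have "d = l + 2 * (n - r)"
  proof -
    have "d = 2 * n + d mod 2" "l = 2 * r + l mod 2" using assms(6,7) by auto
    then show ?thesis using assms(2-5) by linarith
  qed
  ultimately interpret B_elimination d "n - r" l \<pi>\<^sub>O half
    by unfold_locales
  show ?thesis by (rule O_alg_iso_eliminate)
qed

end
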